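(* Let $p\ge 3$ and let $T$ be a tree with colour classes $A,B$, $|A|\le|B|$. Let $k=\delta(A)=\min\{d_T(x):x\in A\}$ and assume $k\ge 2$; let $A_0=\{x\in A:d_T(x)=k\}$, $B_0=\{y\in B:|N_T(y)\cap A_0|\ge2\}$, $a=|A|$, and when $B_0\ne\emptyset$ let $b+2=\min\{d_T(y):y\in B_0\}$. Then: (1) if $k$ is even, all graphs in $\mathcal{H}_1(n,p,a,k)\cup\mathcal{H}_2(n,p,a,k)$ are $T^{p+1}$-free; (2) if $k$ is odd and $B_0=\emptyset$, all graphs in $\mathcal{H}_2(n,p,a,k)$ are $T^{p+1}$-free; (3) if $k$ is odd, $B_0\ne\emptyset$ and ($b=0$ or $0<b<a-1-\lceil\frac{k-1}{a-1}\rceil$), all graphs in $\mathcal{H}_1(n,p,a,k)$ are $T^{p+1}$-free; (4) if $k$ is odd, $B_0\neq\emptyset$ and $b>\max\{0,a-1-\lceil\frac{k-1}{a-1}\rceil\}$, all graphs in $\mathcal{H}_2(n,p,a,b-1,k)$ are $T^{p+1}$-free; (5) if $k$ is odd, $B_0\ne\emptyset$ and $b=a-1-\lceil\frac{k-1}{a-1}\rceil>0$, all graphs in $\mathcal{H}_1(n,p,a,k)\cup\mathcal{H}_2(n,p,a,b-1,k)$ are $T^{p+1}$-free.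
   Context: For a graph $F$ and integer $p\ge1$, the edge blow-up $F^{p+1}$ is obtained from $F$ by replacing each edge by a clique $K_{p+1}$ containing that edge, the newly added vertices of distinct cliques all distinct. $R(n,d)$ denotes an almost $d$-regular graph on $n$ vertices (all degrees $d$ except at most one vertex of degree $d-1$). $K(n_1,\dots,n_p)$ is the complete $p$-partite graph with parts of sizes $n_1,\dots,n_p$, and $\vee$ denotes the join. $L_1(n_1,\dots,n_p;k)$ is the family of graphs obtained from $K(n_1,\dots,n_p)$ by embedding a copy of $R(2k-1,k-1)$ inside one part; $L_2(n_1,\dots,n_p;k)$ is obtained by embedding inside one part a copy of $R(k+1,k-1)\cup K_{k-1}$ if $k$ is even, or of $2K_k$ if $k$ is odd. For positive integers $n\ge a$: $\mathcal{H}_i(n,p,a,k)=K_{a-1}\vee L_i(n_1,\dots,n_p;k)$ ($i=1,2$) and $\mathcal{H}_2(n,p,a,d,k)=R(a-1,d)\vee L_2(n_1,\dots,n_p;k)$, taken over all $n_1,\dots,n_p$ with $\sum_i n_i=n-a+1$. *)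

theory Defs
  imports Complex_Main
begin

definition is_graph :: "'a set \<Rightarrow> 'a set set \<Rightarrow> bool" where
  "is_graph V E \<longleftrightarrow> finite V \<and> (\<forall>e\<in>E. \<exists>u v. u \<in> V \<and> v \<in> V \<and> u \<noteq> v \<and> e = {u, v})"

definition nbrs :: "'a set set \<Rightarrow> 'a \<Rightarrow> 'a set" where
  "nbrs E v = {u. {u, v} \<in> E}"

definition deg :: "'a set set \<Rightarrow> 'a \<Rightarrow> nat" where
  "deg E v = card (nbrs E v)"

definition complete_edges :: "'a set \<Rightarrow> 'a set set" where
  "complete_edges S = {{u, v} | u v. u \<in> S \<and> v \<in> S \<and> u \<noteq> v}"

definition connected_graph :: "'a set \<Rightarrow> 'a set set \<Rightarrow> bool" where
  "connected_graph V E \<longleftrightarrow> (\<forall>u\<in>V. \<forall>v\<in>V. \<exists>xs. xs \<noteq> [] \<and> hd xs = u \<and> last xs = v \<and>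
      set xs \<subseteq> V \<and> (\<forall>i < length xs - 1. {xs ! i, xs ! Suc i} \<in> E))"

definition acyclic_graph :: "'a set \<Rightarrow> 'a set set \<Rightarrow> bool" where
  "acyclic_graph V E \<longleftrightarrow> \<not> (\<exists>xs. length xs \<ge> 3 \<and> distinct xs \<and> set xs \<subseteq> V \<and>
      (\<forall>i < length xs - 1. {xs ! i, xs ! Suc i} \<in> E) \<and> {last xs, hd xs} \<in> E)"

definition is_tree :: "'a set \<Rightarrow> 'a set set \<Rightarrow> bool" where
  "is_tree V E \<longleftrightarrow> is_graph V E \<and> V \<noteq> {} \<and> connected_graph V E \<and> acyclic_graph V E"

definition colour_classes :: "'a set \<Rightarrow> 'a set set \<Rightarrow> 'a set \<Rightarrow> 'a set \<Rightarrow> bool" where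
  "colour_classes V E A B \<longleftrightarrow> A \<union> B = V \<and> A \<inter> B = {} \<and>
      (\<forall>e\<in>E. \<exists>u\<in>A. \<exists>v\<in>B. e = {u, v})"

definition subgraph_of :: "'a set \<Rightarrow> 'a set set \<Rightarrow> 'b set \<Rightarrow> 'b set set \<Rightarrow> bool" where
  "subgraph_of VF EF VG EG \<longleftrightarrow>
     (\<exists>f. inj_on f VF \<and> f ` VF \<subseteq> VG \<and> (\<forall>e\<in>EF. f ` e \<in> EG))"

text \<open>Edge blow-up F^{p+1}: each edge e gets p-1 new vertices Inr (e,i), forming with e a K_{p+1}.\<close>
definition blowup_V :: "'a set \<Rightarrow> 'a set set \<Rightarrow> nat \<Rightarrow> ('a + 'a set \<times> nat) set" where
  "blowup_V V E p = Inl ` V \<union> {Inr (e, i) | e i. e \<in> E \<and> i < p - 1}"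

definition blowup_E :: "'a set \<Rightarrow> 'a set set \<Rightarrow> nat \<Rightarrow> ('a + 'a set \<times> nat) set set" where
  "blowup_E V E p = (\<Union>e\<in>E. complete_edges (Inl ` e \<union> {Inr (e, i) | i. i < p - 1}))"

definition blowup_free :: "'a set \<Rightarrow> 'a set set \<Rightarrow> nat \<Rightarrow> 'b set \<Rightarrow> 'b set set \<Rightarrow> bool" where
  "blowup_free VF EF p VG EG \<longleftrightarrow> \<not> subgraph_of (blowup_V VF EF p) (blowup_E VF EF p) VG EG"

text \<open>R(n,d): almost d-regular graph (here the vertex set is given; its size is fixed separately).\<close>
definition almost_regular :: "nat \<Rightarrow> 'b set \<Rightarrow> 'b set set \<Rightarrow> bool" where
  "almost_regular d W EW \<longleftrightarrow> is_graph W EW \<and>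
     (\<forall>v\<in>W. deg EW v = d \<or> deg EW v = d - 1) \<and> card {v\<in>W. deg EW v \<noteq> d} \<le> 1"

definition in_family :: "('b set \<Rightarrow> 'b set set \<Rightarrow> bool) \<Rightarrow> ('b set \<Rightarrow> 'b set set \<Rightarrow> bool)
    \<Rightarrow> nat \<Rightarrow> nat \<Rightarrow> nat \<Rightarrow> 'b set \<Rightarrow> 'b set set \<Rightarrow> bool" where
  "in_family topg emb n p a V E \<longleftrightarrow>
    (\<exists>X EXX (P :: nat \<Rightarrow> 'b set) j W EW.
       finite V \<and> card V = n \<and> X \<subseteq> V \<and> card X = a - 1 \<and>
       (\<forall>i<p. P i \<noteq> {}) \<and> (\<forall>i<p. \<forall>i'<p. i \<noteq> i' \<longrightarrow> P i \<inter> P i' = {}) \<and>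
       (\<Union>i<p. P i) = V - X \<and>
       topg X EXX \<and> j < p \<and> W \<subseteq> P j \<and> emb W EW \<and>
       E = EXX \<union> EW \<union> {{u, v} | u v. u \<in> X \<and> v \<in> V - X} \<union>
           {{u, v} | u v i i'. i < p \<and> i' < p \<and> i \<noteq> i' \<and> u \<in> P i \<and> v \<in> P i'})"

definition emb_L1 :: "nat \<Rightarrow> 'b set \<Rightarrow> 'b set set \<Rightarrow> bool" where
  "emb_L1 k W EW \<longleftrightarrow> card W = 2 * k - 1 \<and> almost_regular (k - 1) W EW"

definition emb_L2 :: "nat \<Rightarrow> 'b set \<Rightarrow> 'b set set \<Rightarrow> bool" where
  "emb_L2 k W EW \<longleftrightarrow> (\<exists>W1 W2 E1. W = W1 \<union> W2 \<and> W1 \<inter> W2 = {} \<and>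
     (if even k
      then card W1 = k + 1 \<and> almost_regular (k - 1) W1 E1 \<and> card W2 = k - 1 \<and>
           EW = E1 \<union> complete_edges W2
      else card W1 = k \<and> card W2 = k \<and> EW = complete_edges W1 \<union> complete_edges W2))"

definition H1 :: "nat \<Rightarrow> nat \<Rightarrow> nat \<Rightarrow> nat \<Rightarrow> 'b set \<Rightarrow> 'b set set \<Rightarrow> bool" where
  "H1 n p a k = in_family (\<lambda>X EXX. EXX = complete_edges X) (emb_L1 k) n p a"

definition H2 :: "nat \<Rightarrow> nat \<Rightarrow> nat \<Rightarrow> nat \<Rightarrow> 'b set \<Rightarrow> 'b set set \<Rightarrow> bool" where
  "H2 n p a k = in_family (\<lambda>X EXX. EXX = complete_edges X) (emb_L2 k) n p a"

definition H2d :: "nat \<Rightarrow> nat \<Rightarrow> nat \<Rightarrow> nat \<Rightarrow> nat \<Rightarrow> 'b set \<Rightarrow> 'b set set \<Rightarrow> bool" where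
  "H2d n p a d k = in_family (\<lambda>X EXX. almost_regular d X EXX) (emb_L2 k) n p a"

end

theory Submission
  imports Defs
begin

text \<open>Suppose T^{p+1} embeds in a host graph: an apex set X of a - 1 vertices joined to a
  complete p-partite graph one of whose parts contains a graph W splitting into classes C1 and
  C2 with no edges between them. The clique of a tree edge whose image avoids X has two vertices
  in one part, hence at least two vertices in C1 or in C2. Since X is too small to absorb all
  of A, and since any vertex set of a tree spans fewer edges than it has vertices, counting the
  edges at the A-vertices not mapped into X shows that there are exactly two such vertices
  x1, x2, both of degree k, with a common neighbour y mapped into X, and that at least 2k - 2
  cliques must be paid for by vertices of C1 and C2. This forces |C1| + |C2| \<ge> 2k and k odd,
  which excludes H1, and H2 for even k. Otherwise y lies in B0, and all neighbours of y but x1, x2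
  are mapped into X next to the image of y, so deg y - 2 is at most the maximum degree of the
  graph on X; this excludes H2 when B0 is empty, and H2(n,p,a,b-1,k) because deg y \<ge> b + 2.\<close>

section \<open>Forests\<close>

definition edges_in :: "'a set set \<Rightarrow> 'a set \<Rightarrow> 'a set set" where
  "edges_in E U = {e \<in> E. e \<subseteq> U}"

definition is_walk :: "'a set set \<Rightarrow> 'a list \<Rightarrow> bool" where
  "is_walk E xs \<longleftrightarrow> (\<forall>i < length xs - 1. {xs ! i, xs ! Suc i} \<in> E)"

lemma is_graph_edgeD:
  assumes "is_graph V E" "{u, w} \<in> E"
  shows "u \<noteq> w" "u \<in> V" "w \<in> V"
proof -
  obtain x y where "x \<in> V" "y \<in> V" "x \<noteq> y" "{u, w} = {x, y}"
    using assms unfolding is_graph_def by blast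
  then show "u \<noteq> w" "u \<in> V" "w \<in> V" by (auto simp: doubleton_eq_iff)
qed

lemma is_graph_edge_subset:
  assumes "is_graph V E" "e \<in> E"
  shows "e \<subseteq> V"
proof -
  obtain u v where "u \<in> V" "v \<in> V" "e = {u, v}" using assms unfolding is_graph_def by meson
  then show ?thesis by simp
qed

lemma finite_graph_edges:
  assumes "is_graph V E"
  shows "finite E"
proof -
  have "E \<subseteq> Pow V" using is_graph_edge_subset[OF assms] by blast
  then show ?thesis using assms finite_subset unfolding is_graph_def by blast
qed

lemma finite_nbrs:
  assumes "is_graph V E"
  shows "finite (nbrs E v)"
proof -
  have "nbrs E v \<subseteq> V" unfolding nbrs_def using is_graph_edgeD(2)[OF assms] by blast
  then show ?thesis using assms finite_subset unfolding is_graph_def by blast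
qed

lemma is_graph_edge_at:
  assumes "is_graph V E" "e \<in> E" "v \<in> e"
  obtains x where "e = {v, x}" "v \<noteq> x"
proof -
  obtain a b where "a \<noteq> b" "e = {a, b}" using assms(1,2) unfolding is_graph_def by meson
  then show ?thesis using that assms(3) by (auto simp: insert_commute)
qed

lemma graph_edges_Int:
  assumes "is_graph V E" "e \<in> E" "e' \<in> E" "e \<noteq> e'" "v \<in> e" "v \<in> e'"
  shows "e \<inter> e' = {v}"
proof -
  obtain x y where "e = {v, x}" "v \<noteq> x" "e' = {v, y}" "v \<noteq> y"
    using is_graph_edge_at assms by metis
  then show ?thesis using assms(4) by auto
qed

lemma is_walk_Cons:
  assumes "is_walk E xs" "xs \<noteq> []" "{w, hd xs} \<in> E"
  shows "is_walk E (w # xs)"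
  unfolding is_walk_def
proof (intro allI impI)
  fix i assume i: "i < length (w # xs) - 1"
  show "{(w # xs) ! i, (w # xs) ! Suc i} \<in> E"
  proof (cases i)
    case 0 then show ?thesis using assms(2,3) by (simp add: hd_conv_nth)
  next
    case (Suc j) then show ?thesis using assms(1) i unfolding is_walk_def by auto
  qed
qed

lemma is_walk_take: "is_walk E xs \<Longrightarrow> is_walk E (take n xs)"
  unfolding is_walk_def by auto

lemma maximal_path_exists:
  assumes "finite U" "U \<noteq> {}"
  obtains xs where "xs \<noteq> []" "distinct xs" "set xs \<subseteq> U" "is_walk E xs"
    and "\<And>w. w \<in> U \<Longrightarrow> {w, hd xs} \<in> E \<Longrightarrow> w \<in> set xs"
proof -
  define has_path_of_length where "has_path_of_length n \<longleftrightarrow>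
      (\<exists>xs. length xs = n \<and> xs \<noteq> [] \<and> distinct xs \<and> set xs \<subseteq> U \<and> is_walk E xs)" for n
  obtain u where "u \<in> U" using assms(2) by blast
  then have "has_path_of_length 1"
    unfolding has_path_of_length_def by (intro exI[of _ "[u]"]) (auto simp: is_walk_def)
  moreover have "\<forall>n. has_path_of_length n \<longrightarrow> n \<le> card U"
    unfolding has_path_of_length_def using assms(1) by (metis card_mono distinct_card)
  ultimately obtain m where "has_path_of_length m" and m_max: "\<forall>n. has_path_of_length n \<longrightarrow> n \<le> m"
    using Nat.ex_has_greatest_nat by blast
  then obtain xs where xs: "length xs = m" "xs \<noteq> []" "distinct xs" "set xs \<subseteq> U" "is_walk E xs"
    unfolding has_path_of_length_def by blast
  have "w \<in> set xs" if "w \<in> U" "{w, hd xs} \<in> E" for w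
  proof (rule ccontr)
    assume "w \<notin> set xs"
    then have "has_path_of_length (Suc m)"
      unfolding has_path_of_length_def using xs that is_walk_Cons[OF xs(5,2)]
      by (intro exI[of _ "w # xs"]) auto
    then show False using m_max by fastforce
  qed
  then show ?thesis using that xs by blast
qed

text \<open>A longest path in U, starting at v0, contains every neighbour of v0 in U; reaching one
  other than the successor of v0 closes a cycle.\<close>
lemma not_acyclic_if_min_degree_2:
  assumes g: "is_graph V E" and "finite U" "U \<subseteq> V" "U \<noteq> {}"
    and deg2: "\<forall>u\<in>U. 2 \<le> card {w \<in> U. {u, w} \<in> E}"
  shows "\<not> acyclic_graph V E"
proof -
  obtain xs where xs: "xs \<noteq> []" "distinct xs" "set xs \<subseteq> U" "is_walk E xs"
    and closed: "\<And>w. w \<in> U \<Longrightarrow> {w, hd xs} \<in> E \<Longrightarrow> w \<in> set xs"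
    using maximal_path_exists[OF assms(2,4)] by blast
  define v0 where "v0 = hd xs"
  have "v0 \<in> U" using xs unfolding v0_def by auto
  have "\<not> {w \<in> U. {v0, w} \<in> E} \<subseteq> {xs ! 1}"
  proof
    assume "{w \<in> U. {v0, w} \<in> E} \<subseteq> {xs ! 1}"
    then have "card {w \<in> U. {v0, w} \<in> E} \<le> 1" using card_mono[of "{xs ! 1}"] by fastforce
    then show False using deg2 \<open>v0 \<in> U\<close> by fastforce
  qed
  then obtain w where w: "w \<in> U" "{v0, w} \<in> E" "w \<noteq> xs ! 1" by blast
  have "w \<noteq> v0" using is_graph_edgeD(1)[OF g w(2)] by simp
  have "w \<in> set xs" using closed w unfolding v0_def by (simp add: insert_commute)
  then obtain i where i: "i < length xs" "xs ! i = w" by (metis in_set_conv_nth)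
  have "i \<noteq> 0" using i \<open>w \<noteq> v0\<close> xs(1) unfolding v0_def by (metis hd_conv_nth)
  moreover have "i \<noteq> 1" using i w(3) by auto
  ultimately have "2 \<le> i" by linarith
  define ys where "ys = take (Suc i) xs"
  have "length ys \<ge> 3" using i \<open>2 \<le> i\<close> unfolding ys_def by simp
  moreover have "distinct ys" using xs(2) unfolding ys_def by simp
  moreover have "set ys \<subseteq> V"
    using xs(3) assms(3) set_take_subset[of "Suc i" xs] unfolding ys_def by blast
  moreover have "\<forall>j < length ys - 1. {ys ! j, ys ! Suc j} \<in> E"
    using is_walk_take[OF xs(4)] unfolding ys_def is_walk_def by blast
  moreover have "last ys = w" using i unfolding ys_def by (simp add: take_Suc_conv_app_nth)
  moreover have "hd ys = v0" using xs(1) unfolding ys_def v0_def by (simp add: hd_take)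
  moreover have "{last ys, hd ys} \<in> E" using w(2) by (simp add: calculation insert_commute)
  ultimately show ?thesis unfolding acyclic_graph_def by blast
qed

lemma edges_in_remove_vertex:
  assumes "is_graph V E"
  shows "edges_in E U \<subseteq> edges_in E (U - {u}) \<union> (\<lambda>w. {u, w}) ` {w \<in> U. {u, w} \<in> E}"
proof
  fix e assume e: "e \<in> edges_in E U"
  show "e \<in> edges_in E (U - {u}) \<union> (\<lambda>w. {u, w}) ` {w \<in> U. {u, w} \<in> E}"
  proof (cases "u \<in> e")
    case True
    then obtain w where "e = {u, w}"
      using is_graph_edge_at[OF assms] e unfolding edges_in_def by blast
    then show ?thesis using e unfolding edges_in_def by blast
  next
    case False
    then show ?thesis using e unfolding edges_in_def by blast
  qed
qed

text \<open>Remove a vertex of degree at most one inside U; if there is none, U carries a cycle.\<close>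
lemma card_edges_in_forest:
  assumes g: "is_graph V E" and ac: "acyclic_graph V E"
  shows "U \<subseteq> V \<Longrightarrow> U \<noteq> {} \<Longrightarrow> card (edges_in E U) + 1 \<le> card U"
proof (induction "card U" arbitrary: U rule: less_induct)
  case less
  have "finite U" using less.prems g finite_subset unfolding is_graph_def by blast
  have fin_edges: "finite (edges_in E Z)" for Z
    using finite_graph_edges[OF g] unfolding edges_in_def by simp
  obtain u where u: "u \<in> U" and deg_u: "card {w \<in> U. {u, w} \<in> E} \<le> 1"
    using not_acyclic_if_min_degree_2[OF g \<open>finite U\<close> less.prems] ac by force
  show ?case
  proof (cases "U = {u}")
    case True
    have "edges_in E U = {}"
      using g True unfolding edges_in_def is_graph_def by fastforce
    then show ?thesis using True by simp
  next
    case False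
    then have "U - {u} \<noteq> {}" using u by blast
    then have IH: "card (edges_in E (U - {u})) + 1 \<le> card (U - {u})"
      using less.hyps[OF card_Diff1_less[OF \<open>finite U\<close> u]] less.prems(1) by blast
    have "card (edges_in E U)
        \<le> card (edges_in E (U - {u}) \<union> (\<lambda>w. {u, w}) ` {w \<in> U. {u, w} \<in> E})"
      using edges_in_remove_vertex[OF g] fin_edges \<open>finite U\<close> by (intro card_mono) auto
    also have "\<dots> \<le> card (edges_in E (U - {u})) + card ((\<lambda>w. {u, w}) ` {w \<in> U. {u, w} \<in> E})"
      by (rule card_Un_le)
    also have "\<dots> \<le> card (edges_in E (U - {u})) + 1"
      using card_image_le[of "{w \<in> U. {u, w} \<in> E}" "\<lambda>w. {u, w}"] deg_u \<open>finite U\<close> by simp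
    finally show ?thesis using IH u \<open>finite U\<close> by (simp add: card_Diff_singleton)
  qed
qed

lemma deg_eq_card_incident_edges:
  assumes g: "is_graph V E"
  shows "deg E x = card {e \<in> E. x \<in> e}"
proof -
  have "(\<lambda>w. {w, x}) ` nbrs E x = {e \<in> E. x \<in> e}"
  proof
    show "(\<lambda>w. {w, x}) ` nbrs E x \<subseteq> {e \<in> E. x \<in> e}" unfolding nbrs_def by auto
    show "{e \<in> E. x \<in> e} \<subseteq> (\<lambda>w. {w, x}) ` nbrs E x"
    proof
      fix e assume e: "e \<in> {e \<in> E. x \<in> e}"
      then obtain w where "e = {x, w}" using is_graph_edge_at[OF g] by blast
      then show "e \<in> (\<lambda>w. {w, x}) ` nbrs E x"
        using e unfolding nbrs_def by (auto simp: insert_commute)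
    qed
  qed
  moreover have "inj_on (\<lambda>w. {w, x}) (nbrs E x)"
    by (rule inj_onI) (metis doubleton_eq_iff)
  ultimately show ?thesis unfolding deg_def by (metis card_image)
qed

lemma sum_card_Int_eq_sum_card_incident:
  assumes "finite Fs" "finite Rs"
  shows "(\<Sum>e\<in>Fs. card (e \<inter> Rs)) = (\<Sum>v\<in>Rs. card {e \<in> Fs. v \<in> e})"
proof -
  have "(\<Sum>e\<in>Fs. card (e \<inter> Rs)) = (\<Sum>e\<in>Fs. \<Sum>v\<in>Rs. if v \<in> e then 1 else 0)"
  proof (rule sum.cong[OF refl])
    fix e
    have "e \<inter> Rs = {v \<in> Rs. v \<in> e}" by auto
    then show "card (e \<inter> Rs) = (\<Sum>v\<in>Rs. if v \<in> e then 1 else 0)"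
      using assms(2) by (simp add: sum.inter_filter[symmetric])
  qed
  also have "\<dots> = (\<Sum>v\<in>Rs. \<Sum>e\<in>Fs. if v \<in> e then 1 else 0)" by (rule sum.swap)
  also have "\<dots> = (\<Sum>v\<in>Rs. card {e \<in> Fs. v \<in> e})"
    using assms(1) by (simp add: sum.inter_filter[symmetric])
  finally show ?thesis .
qed

section \<open>Embeddings of the edge blow-up\<close>

locale blowup_embedding =
  fixes V :: "'a set" and E :: "'a set set" and p :: nat
    and VG :: "'b set" and EG :: "'b set set" and f :: "'a + 'a set \<times> nat \<Rightarrow> 'b"
  assumes graph: "is_graph V E" and p_pos: "1 \<le> p"
    and inj: "inj_on f (blowup_V V E p)" and img: "f ` blowup_V V E p \<subseteq> VG"
    and hom: "\<forall>e\<in>blowup_E V E p. f ` e \<in> EG"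
begin

definition phi :: "'a \<Rightarrow> 'b" where
  "phi v = f (Inl v)"

definition new_vertices :: "'a set \<Rightarrow> ('a + 'a set \<times> nat) set" where
  "new_vertices e = {Inr (e, i) | i. i < p - 1}"

definition blowup_clique :: "'a set \<Rightarrow> ('a + 'a set \<times> nat) set" where
  "blowup_clique e = Inl ` e \<union> new_vertices e"

definition host_clique :: "'a set \<Rightarrow> 'b set" where
  "host_clique e = f ` blowup_clique e"

lemma finite_V: "finite V"
  using graph unfolding is_graph_def by simp

lemma finite_E: "finite E"
  using finite_graph_edges[OF graph] .

lemma card_edge:
  assumes "e \<in> E"
  shows "card e = 2"
proof -
  obtain u v where "u \<noteq> v" "e = {u, v}" using graph assms unfolding is_graph_def by meson
  then show ?thesis by simp
qed

lemma Inl_V_subset: "Inl ` V \<subseteq> blowup_V V E p"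
  unfolding blowup_V_def by blast

lemma blowup_clique_subset:
  assumes "e \<in> E"
  shows "blowup_clique e \<subseteq> blowup_V V E p"
proof -
  have "Inl ` e \<subseteq> Inl ` V" using is_graph_edge_subset[OF graph assms] by blast
  then show ?thesis
    unfolding blowup_clique_def new_vertices_def blowup_V_def using assms by blast
qed

lemma new_vertices_subset: "e \<in> E \<Longrightarrow> new_vertices e \<subseteq> blowup_V V E p"
  using blowup_clique_subset unfolding blowup_clique_def by blast

lemma phi_inj: "inj_on phi V"
  unfolding phi_def inj_on_def using inj Inl_V_subset by (auto dest: inj_onD)

lemma new_vertices_eq: "new_vertices e = (\<lambda>i. Inr (e, i)) ` {..<p - 1}"
  unfolding new_vertices_def by auto

lemma finite_new_vertices: "finite (new_vertices e)"
  unfolding new_vertices_eq by simp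

lemma card_new_vertices: "card (new_vertices e) = p - 1"
  unfolding new_vertices_eq by (simp add: card_image inj_on_def)

lemma card_blowup_clique:
  assumes "e \<in> E"
  shows "card (blowup_clique e) = p + 1"
proof -
  have "card (Inl ` e :: ('a + 'a set \<times> nat) set) = 2"
    using card_edge[OF assms] by (simp add: card_image)
  moreover have "Inl ` e \<inter> new_vertices e = {}" unfolding new_vertices_def by auto
  moreover have "finite e" using card_edge[OF assms] card.infinite by fastforce
  ultimately show ?thesis
    unfolding blowup_clique_def using card_new_vertices finite_new_vertices p_pos
    by (simp add: card_Un_disjoint)
qed

lemma host_clique_subset: "e \<in> E \<Longrightarrow> host_clique e \<subseteq> VG"
  unfolding host_clique_def using blowup_clique_subset img by blast

lemma card_host_clique: "e \<in> E \<Longrightarrow> card (host_clique e) = p + 1"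
  unfolding host_clique_def using card_blowup_clique blowup_clique_subset inj
  by (metis card_image inj_on_subset)

lemma finite_host_clique: "e \<in> E \<Longrightarrow> finite (host_clique e)"
  unfolding host_clique_def blowup_clique_def
  using finite_new_vertices card_edge card.infinite by fastforce

lemma host_clique_edge:
  assumes "e \<in> E" "u \<in> host_clique e" "v \<in> host_clique e" "u \<noteq> v"
  shows "{u, v} \<in> EG"
proof -
  obtain s t where st: "s \<in> blowup_clique e" "t \<in> blowup_clique e" "u = f s" "v = f t"
    using assms unfolding host_clique_def by blast
  then have "{s, t} \<in> complete_edges (blowup_clique e)"
    using assms(4) unfolding complete_edges_def by blast
  then have "{s, t} \<in> blowup_E V E p"
    unfolding blowup_E_def blowup_clique_def new_vertices_def using assms(1) by blast
  then show ?thesis using hom st by force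
qed

lemma host_clique_Int:
  assumes "e \<in> E" "e' \<in> E" "e \<noteq> e'"
  shows "host_clique e \<inter> host_clique e' \<subseteq> phi ` (e \<inter> e')"
proof
  fix w assume "w \<in> host_clique e \<inter> host_clique e'"
  then obtain s t where st: "s \<in> blowup_clique e" "t \<in> blowup_clique e'" "w = f s" "w = f t"
    unfolding host_clique_def by blast
  moreover have "s \<in> blowup_V V E p" "t \<in> blowup_V V E p"
    using st blowup_clique_subset assms(1,2) by blast+
  ultimately have "s = t" using inj_onD[OF inj] by metis
  then have "s \<in> Inl ` (e \<inter> e')"
    using st assms(3) unfolding blowup_clique_def new_vertices_def by auto
  then show "w \<in> phi ` (e \<inter> e')" using st unfolding phi_def by blast
qed

lemma phi_in_host_clique: "v \<in> e \<Longrightarrow> phi v \<in> host_clique e"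
  unfolding phi_def host_clique_def blowup_clique_def by blast

end

section \<open>Counting in the host graph\<close>

text \<open>The host graph is the join of an apex set X with a complete p-partite graph, one part of
  which contains a graph splitting into classes C1 and C2 without edges between them.
  Of this structure only the pigeonhole consequence is kept: a (p+1)-clique avoiding X has two
  vertices in one part, hence an edge inside C1 or inside C2.\<close>
locale host_embedding = blowup_embedding V E p VG EG f
  for V :: "'a set" and E p VG EG and f :: "'a + 'a set \<times> nat \<Rightarrow> 'b" +
  fixes A B :: "'a set" and X C1 C2 :: "'b set"
  assumes acyclic: "acyclic_graph V E" and col: "colour_classes V E A B"
    and finite_X: "finite X" and finite_C1: "finite C1" and finite_C2: "finite C2"
    and C1_C2_disjoint: "C1 \<inter> C2 = {}"
    and X_C1_disjoint: "X \<inter> C1 = {}" and X_C2_disjoint: "X \<inter> C2 = {}"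
    and clique_meets_classes: "\<And>Q. Q \<subseteq> VG \<Longrightarrow> card Q = p + 1 \<Longrightarrow>
          (\<forall>u\<in>Q. \<forall>v\<in>Q. u \<noteq> v \<longrightarrow> {u, v} \<in> EG) \<Longrightarrow> Q \<inter> X = {} \<Longrightarrow>
          \<exists>u\<in>Q. \<exists>v\<in>Q. u \<noteq> v \<and> u \<in> C1 \<union> C2 \<and> v \<in> C1 \<union> C2"
    and no_cross_edges: "\<And>u v. u \<in> C1 \<Longrightarrow> v \<in> C2 \<Longrightarrow> {u, v} \<notin> EG"
begin

definition mapped_to :: "'b set \<Rightarrow> 'a set" where
  "mapped_to C = {v \<in> V. phi v \<in> C}"

definition free_A :: "'a set" where
  "free_A = A - mapped_to X"

definition free_edges :: "'a set set" where
  "free_edges = {e \<in> E. host_clique e \<inter> X = {}}"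

definition apex_hit_edges :: "'a set set" where
  "apex_hit_edges = {e \<in> E. e \<inter> mapped_to X = {} \<and> host_clique e \<inter> X \<noteq> {}}"

definition apex_link_edges :: "'a set set" where
  "apex_link_edges = {e \<in> E. e \<inter> free_A \<noteq> {} \<and> e \<inter> mapped_to X \<noteq> {}}"

definition class_edges :: "'b set \<Rightarrow> 'a set set" where
  "class_edges C = {e \<in> free_edges. 2 \<le> card (host_clique e \<inter> C)}"

definition class_degree :: "'b set \<Rightarrow> 'a \<Rightarrow> nat" where
  "class_degree C v = card {e \<in> class_edges C. v \<in> e}"

lemma A_B: "A \<union> B = V" "A \<inter> B = {}"
  using col unfolding colour_classes_def by auto

lemma edge_A_B:
  assumes "e \<in> E"
  obtains u v where "e = {u, v}" "u \<in> A" "v \<in> B"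
  using assms col unfolding colour_classes_def by blast

lemma edge_A_unique: "e \<in> E \<Longrightarrow> v \<in> e \<Longrightarrow> v' \<in> e \<Longrightarrow> v \<in> A \<Longrightarrow> v' \<in> A \<Longrightarrow> v = v'"
  and edge_B_unique: "e \<in> E \<Longrightarrow> v \<in> e \<Longrightarrow> v' \<in> e \<Longrightarrow> v \<in> B \<Longrightarrow> v' \<in> B \<Longrightarrow> v = v'"
  by (metis A_B(2) disjoint_iff edge_A_B insertE singletonD)+

lemma finite_A: "finite A"
  using A_B(1) finite_V by (metis finite_Un)

lemma mapped_to_subset: "mapped_to C \<subseteq> V"
  unfolding mapped_to_def by auto

lemma finite_mapped_to: "finite (mapped_to C)"
  using finite_V mapped_to_subset finite_subset by blast

lemma free_A_subset: "free_A \<subseteq> A"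
  unfolding free_A_def by auto

lemma finite_free_A: "finite free_A"
  using finite_A free_A_subset finite_subset by blast

lemma class_edges_subset: "class_edges C \<subseteq> E"
  unfolding class_edges_def free_edges_def by auto

lemma finite_free_edges: "finite free_edges"
  and finite_apex_hit_edges: "finite apex_hit_edges"
  and finite_apex_link_edges: "finite apex_link_edges"
  and finite_class_edges: "finite (class_edges C)"
  and finite_edges_in: "finite (edges_in E U)"
  using finite_E finite_subset[OF class_edges_subset]
  unfolding free_edges_def apex_hit_edges_def apex_link_edges_def edges_in_def by auto

lemma card_split_A_B: "Z \<subseteq> V \<Longrightarrow> card Z = card (Z \<inter> A) + card (Z \<inter> B)"
  and sum_split_A_B: "Z \<subseteq> V \<Longrightarrow> sum g Z = sum g (Z \<inter> A) + sum g (Z \<inter> B)"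
proof -
  assume Z: "Z \<subseteq> V"
  then have eq: "Z = (Z \<inter> A) \<union> (Z \<inter> B)" using A_B by blast
  have "finite (Z \<inter> A)" "finite (Z \<inter> B)" "(Z \<inter> A) \<inter> (Z \<inter> B) = {}"
    using Z finite_V finite_subset A_B by blast+
  then show "card Z = card (Z \<inter> A) + card (Z \<inter> B)" "sum g Z = sum g (Z \<inter> A) + sum g (Z \<inter> B)"
    by (subst eq; simp add: card_Un_disjoint sum.union_disjoint)+
qed

lemma mapped_to_classes_apex_disjoint: "mapped_to C \<inter> mapped_to X = {}" if "X \<inter> C = {}" for C
  using that unfolding mapped_to_def by blast

lemma apex_hit_edge_new_vertex:
  assumes "e \<in> apex_hit_edges"
  shows "\<exists>s\<in>new_vertices e. f s \<in> X"
proof -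
  obtain s where s: "s \<in> blowup_clique e" "f s \<in> X"
    using assms unfolding apex_hit_edges_def host_clique_def by blast
  have "s \<notin> Inl ` e"
  proof
    assume "s \<in> Inl ` e"
    then obtain v where "v \<in> e" "s = Inl v" by blast
    then have "v \<in> mapped_to X"
      using s assms is_graph_edge_subset[OF graph]
      unfolding mapped_to_def phi_def apex_hit_edges_def by blast
    then show False using \<open>v \<in> e\<close> assms unfolding apex_hit_edges_def by blast
  qed
  then show ?thesis using s unfolding blowup_clique_def by blast
qed

text \<open>The apex set X must host the images of the vertices in mapped_to X and, for each edge
  in apex_hit_edges, the image of one of its new vertices; all these are distinct.\<close>
lemma card_mapped_to_apex_add_card_apex_hit_edges:
  "card (mapped_to X) + card apex_hit_edges \<le> card X"
proof -
  define g where "g e = (SOME s. s \<in> new_vertices e \<and> f s \<in> X)" for e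
  have g: "g e \<in> new_vertices e \<and> f (g e) \<in> X" if "e \<in> apex_hit_edges" for e
  proof -
    have "\<exists>s. s \<in> new_vertices e \<and> f s \<in> X" using apex_hit_edge_new_vertex[OF that] by blast
    then show ?thesis unfolding g_def by (rule someI_ex)
  qed
  define M where "M = Inl ` mapped_to X \<union> g ` apex_hit_edges"
  have "g ` apex_hit_edges \<subseteq> blowup_V V E p"
    using g new_vertices_subset unfolding apex_hit_edges_def by blast
  then have M_subset: "M \<subseteq> blowup_V V E p"
    using Inl_V_subset mapped_to_subset unfolding M_def by blast
  have inj_g: "inj_on g apex_hit_edges"
  proof (rule inj_onI)
    fix e e' assume "e \<in> apex_hit_edges" "e' \<in> apex_hit_edges" "g e = g e'"
    then show "e = e'" using g[of e] g[of e'] unfolding new_vertices_def by auto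
  qed
  have disj: "Inl ` mapped_to X \<inter> g ` apex_hit_edges = {}"
  proof -
    have "g ` apex_hit_edges \<subseteq> range Inr" using g unfolding new_vertices_def by blast
    then show ?thesis by blast
  qed
  have "card (mapped_to X) + card apex_hit_edges
      = card (Inl ` mapped_to X :: ('a + 'a set \<times> nat) set) + card (g ` apex_hit_edges)"
    using card_image[OF inj_g] by (simp add: card_image)
  also have "\<dots> = card M"
    unfolding M_def using finite_mapped_to finite_apex_hit_edges disj
    by (simp add: card_Un_disjoint)
  also have "\<dots> = card (f ` M)"
    using card_image[OF inj_on_subset[OF inj M_subset]] by simp
  also have "\<dots> \<le> card X"
  proof (rule card_mono[OF finite_X])
    show "f ` M \<subseteq> X" using g unfolding M_def mapped_to_def phi_def by auto
  qed
  finally show ?thesis .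
qed

lemma free_edge_class_edges:
  assumes "e \<in> free_edges"
  shows "e \<in> class_edges C1 \<or> e \<in> class_edges C2"
proof -
  have eE: "e \<in> E" using assms unfolding free_edges_def by blast
  obtain u v where uv: "u \<in> host_clique e" "v \<in> host_clique e" "u \<noteq> v"
      "u \<in> C1 \<union> C2" "v \<in> C1 \<union> C2"
    using clique_meets_classes[OF host_clique_subset[OF eE] card_host_clique[OF eE]]
      host_clique_edge[OF eE] assms unfolding free_edges_def by blast
  have "{u, v} \<in> EG" using host_clique_edge[OF eE uv(1-3)] .
  then have "{u, v} \<subseteq> host_clique e \<inter> C1 \<or> {u, v} \<subseteq> host_clique e \<inter> C2"
    using uv no_cross_edges by (metis Un_iff insert_commute insert_subset empty_subsetI IntI)
  then have "2 \<le> card (host_clique e \<inter> C1) \<or> 2 \<le> card (host_clique e \<inter> C2)"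
    using uv(3) finite_host_clique[OF eE]
    by (metis card_2_iff card_mono finite_Int)
  then show ?thesis using assms unfolding class_edges_def by blast
qed

text \<open>Each class edge needs two vertices of C, either images of its ends or images of its own
  new vertices; the latter are not shared between edges.\<close>
lemma two_le_card_class_edge:
  assumes "e \<in> class_edges C"
  shows "2 \<le> card (e \<inter> mapped_to C) + card {s \<in> new_vertices e. f s \<in> C}"
proof -
  let ?N = "{s \<in> new_vertices e. f s \<in> C}"
  have eE: "e \<in> E" using assms class_edges_subset by blast
  have fin: "finite (phi ` (e \<inter> mapped_to C) \<union> f ` ?N)"
    using finite_mapped_to finite_new_vertices by simp
  have "host_clique e \<inter> C \<subseteq> phi ` (e \<inter> mapped_to C) \<union> f ` ?N"
    using is_graph_edge_subset[OF graph eE]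
    unfolding host_clique_def blowup_clique_def mapped_to_def phi_def by blast
  then have "card (host_clique e \<inter> C) \<le> card (phi ` (e \<inter> mapped_to C) \<union> f ` ?N)"
    using fin by (rule card_mono[rotated])
  also have "\<dots> \<le> card (phi ` (e \<inter> mapped_to C)) + card (f ` ?N)"
    by (rule card_Un_le)
  also have "\<dots> \<le> card (e \<inter> mapped_to C) + card ?N"
    by (intro add_mono card_image_le) (use finite_mapped_to finite_new_vertices in auto)
  moreover have "2 \<le> card (host_clique e \<inter> C)" using assms unfolding class_edges_def by blast
  ultimately show ?thesis by linarith
qed

lemma sum_card_new_in_class_le:
  assumes "finite C"
  shows "(\<Sum>e\<in>class_edges C. card {s \<in> new_vertices e. f s \<in> C}) + card (mapped_to C) \<le> card C"
proof -
  define U where "U = (\<Union>e\<in>class_edges C. {s \<in> new_vertices e. f s \<in> C})"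
  define M where "M = Inl ` mapped_to C \<union> U"
  have fin_U: "finite U" unfolding U_def using finite_class_edges finite_new_vertices by simp
  have "card U = (\<Sum>e\<in>class_edges C. card {s \<in> new_vertices e. f s \<in> C})"
    unfolding U_def using finite_class_edges finite_new_vertices
    by (intro card_UN_disjoint) (auto simp: new_vertices_def)
  moreover have "card M = card (mapped_to C) + card U"
  proof -
    have "Inl ` mapped_to C \<inter> U = {}" unfolding U_def new_vertices_def by auto
    then have "card M = card (Inl ` mapped_to C :: ('a + 'a set \<times> nat) set) + card U"
      unfolding M_def using finite_mapped_to fin_U by (simp add: card_Un_disjoint)
    then show ?thesis by (simp add: card_image)
  qed
  moreover have "M \<subseteq> blowup_V V E p"
    unfolding M_def U_def using Inl_V_subset mapped_to_subset new_vertices_subset class_edges_subset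
    by blast
  then have "card (f ` M) = card M" using card_image inj_on_subset[OF inj] by blast
  moreover have "f ` M \<subseteq> C" unfolding M_def U_def mapped_to_def phi_def by auto
  then have "card (f ` M) \<le> card C" using assms by (rule card_mono[rotated])
  ultimately show ?thesis by linarith
qed

lemma class_edges_count:
  assumes "finite C"
  shows "2 * card (class_edges C) + card (mapped_to C)
    \<le> card C + (\<Sum>v\<in>mapped_to C. class_degree C v)"
proof -
  have "2 * card (class_edges C) = (\<Sum>e\<in>class_edges C. 2)" by simp
  also have "\<dots> \<le> (\<Sum>e\<in>class_edges C. card (e \<inter> mapped_to C) + card {s \<in> new_vertices e. f s \<in> C})"
    by (rule sum_mono) (rule two_le_card_class_edge)
  also have "\<dots> = (\<Sum>v\<in>mapped_to C. class_degree C v)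
      + (\<Sum>e\<in>class_edges C. card {s \<in> new_vertices e. f s \<in> C})"
    unfolding sum.distrib class_degree_def
    using sum_card_Int_eq_sum_card_incident[OF finite_class_edges finite_mapped_to] by simp
  finally show ?thesis using sum_card_new_in_class_le[OF assms] by linarith
qed

lemma class_degree_le:
  assumes "finite C" "v \<in> mapped_to C"
  shows "class_degree C v \<le> card {w \<in> C. w \<noteq> phi v \<and> {phi v, w} \<in> EG}"
proof -
  define other where "other e = (SOME w. w \<in> host_clique e \<inter> C \<and> w \<noteq> phi v)" for e
  have other: "other e \<in> host_clique e \<inter> C \<and> other e \<noteq> phi v" if "e \<in> class_edges C" for e
  proof -
    have "\<not> host_clique e \<inter> C \<subseteq> {phi v}"
    proof
      assume "host_clique e \<inter> C \<subseteq> {phi v}"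
      then have "card (host_clique e \<inter> C) \<le> 1" using card_mono[of "{phi v}"] by simp
      then show False using that unfolding class_edges_def by simp
    qed
    then have "\<exists>w. w \<in> host_clique e \<inter> C \<and> w \<noteq> phi v" by blast
    then show ?thesis unfolding other_def by (rule someI_ex)
  qed
  have "other ` {e \<in> class_edges C. v \<in> e} \<subseteq> {w \<in> C. w \<noteq> phi v \<and> {phi v, w} \<in> EG}"
  proof
    fix w assume "w \<in> other ` {e \<in> class_edges C. v \<in> e}"
    then obtain e where e: "e \<in> class_edges C" "v \<in> e" "w = other e" by blast
    have "e \<in> E" using e class_edges_subset by blast
    then have "{phi v, w} \<in> EG"
      using host_clique_edge[OF \<open>e \<in> E\<close> phi_in_host_clique[OF e(2)], of w] other[OF e(1)] e(3)
      by auto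
    then show "w \<in> {w \<in> C. w \<noteq> phi v \<and> {phi v, w} \<in> EG}" using other[OF e(1)] e(3) by simp
  qed
  moreover have "inj_on other {e \<in> class_edges C. v \<in> e}"
  proof (rule inj_onI, rule ccontr)
    fix e e' assume e: "e \<in> {e \<in> class_edges C. v \<in> e}" "e' \<in> {e \<in> class_edges C. v \<in> e}"
      and eq: "other e = other e'" and ne: "e \<noteq> e'"
    have eE: "e \<in> E" "e' \<in> E" using e class_edges_subset by blast+
    have "other e \<in> host_clique e \<inter> host_clique e'"
      using other e eq by (metis IntD1 IntI mem_Collect_eq)
    then have "other e \<in> phi ` (e \<inter> e')" using host_clique_Int[OF eE ne] by blast
    moreover have "e \<inter> e' = {v}" using graph_edges_Int[OF graph eE ne] e by simp
    ultimately show False using other e by simp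
  qed
  ultimately have "card {e \<in> class_edges C. v \<in> e} \<le> card {w \<in> C. w \<noteq> phi v \<and> {phi v, w} \<in> EG}"
    using assms(1) by (intro card_inj_on_le) auto
  then show ?thesis unfolding class_degree_def .
qed

text \<open>The image of v would be adjacent to a vertex of C'.\<close>
lemma class_edges_avoid_other_class:
  assumes CC': "C \<inter> C' = {}" "\<forall>u\<in>C. \<forall>w\<in>C'. {u, w} \<notin> EG"
    and "v \<in> mapped_to C" "e \<in> class_edges C'"
  shows "v \<notin> e"
proof
  assume "v \<in> e"
  have eE: "e \<in> E" using assms class_edges_subset by blast
  have "2 \<le> card (host_clique e \<inter> C')" using assms(4) unfolding class_edges_def by blast
  then have "host_clique e \<inter> C' \<noteq> {}" by (intro notI) simp
  then obtain w where w: "w \<in> host_clique e" "w \<in> C'" by blast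
  have v: "phi v \<in> C" "phi v \<in> host_clique e"
    using assms(3) phi_in_host_clique[OF \<open>v \<in> e\<close>] unfolding mapped_to_def by simp_all
  then have "phi v \<noteq> w" using w CC'(1) by blast
  then have "{phi v, w} \<in> EG" using host_clique_edge[OF eE v(2) w(1)] by blast
  then show False using CC'(2) v(1) w(2) by blast
qed

lemma class_edges_avoid_C2: "v \<in> mapped_to C1 \<Longrightarrow> e \<in> class_edges C2 \<Longrightarrow> v \<notin> e"
  using class_edges_avoid_other_class C1_C2_disjoint no_cross_edges by blast

lemma class_edges_avoid_C1: "v \<in> mapped_to C2 \<Longrightarrow> e \<in> class_edges C1 \<Longrightarrow> v \<notin> e"
proof -
  have "C2 \<inter> C1 = {}" using C1_C2_disjoint by blast
  moreover have "\<forall>u\<in>C2. \<forall>w\<in>C1. {u, w} \<notin> EG"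
  proof (intro ballI)
    fix u w assume "u \<in> C2" "w \<in> C1"
    then show "{u, w} \<notin> EG" using no_cross_edges[of w u] by (simp add: insert_commute)
  qed
  ultimately show "v \<in> mapped_to C2 \<Longrightarrow> e \<in> class_edges C1 \<Longrightarrow> v \<notin> e"
    using class_edges_avoid_other_class by blast
qed

lemma sum_class_degree_forest:
  assumes "mapped_to C \<noteq> {}"
  shows "(\<Sum>v\<in>mapped_to C. class_degree C v) + 1 \<le> card (class_edges C) + card (mapped_to C)"
proof -
  let ?R = "mapped_to C"
  have "card (e \<inter> ?R) \<le> 1 + (if e \<subseteq> ?R then 1 else 0)" if "e \<in> class_edges C" for e
  proof -
    have "card e = 2" using that card_edge class_edges_subset by blast
    moreover have "finite e" using calculation card.infinite by fastforce
    show ?thesis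
    proof (cases "e \<subseteq> ?R")
      case True
      then show ?thesis using \<open>card e = 2\<close> by (simp add: Int_absorb2)
    next
      case False
      then have "card (e \<inter> ?R) < card e" using \<open>finite e\<close> by (intro psubset_card_mono) auto
      then show ?thesis using \<open>card e = 2\<close> False by simp
    qed
  qed
  then have "(\<Sum>e\<in>class_edges C. card (e \<inter> ?R))
      \<le> (\<Sum>e\<in>class_edges C. 1 + (if e \<subseteq> ?R then 1 else 0))"
    by (rule sum_mono)
  also have "\<dots> = card (class_edges C) + (\<Sum>e\<in>class_edges C. if e \<subseteq> ?R then 1 else 0)"
    unfolding sum.distrib by simp
  also have "\<dots> = card (class_edges C) + card {e \<in> class_edges C. e \<subseteq> ?R}"
    using finite_class_edges[of C] by (simp add: sum.inter_filter[symmetric])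
  also have "\<dots> \<le> card (class_edges C) + card (edges_in E ?R)"
    using finite_edges_in class_edges_subset unfolding edges_in_def
    by (intro add_left_mono card_mono) auto
  finally show ?thesis
    using sum_card_Int_eq_sum_card_incident[OF finite_class_edges[of C] finite_mapped_to[of C]]
      card_edges_in_forest[OF graph acyclic mapped_to_subset assms]
    unfolding class_degree_def by linarith
qed

lemma card_class_edges_le:
  assumes "finite C"
  shows "card (class_edges C) + 1 \<le> card C \<or> class_edges C = {}"
proof (cases "mapped_to C = {}")
  case True
  then have "2 * card (class_edges C) \<le> card C" using class_edges_count[OF assms] by simp
  moreover have "card (class_edges C) = 0 \<Longrightarrow> class_edges C = {}"
    using finite_class_edges by simp
  ultimately show ?thesis by linarith
next
  case False
  then show ?thesis using class_edges_count[OF assms] sum_class_degree_forest by fastforce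
qed

lemma card_free_edges_le: "card free_edges \<le> card (class_edges C1) + card (class_edges C2)"
proof -
  have "free_edges \<subseteq> class_edges C1 \<union> class_edges C2" using free_edge_class_edges by blast
  then have "card free_edges \<le> card (class_edges C1 \<union> class_edges C2)"
    using finite_class_edges by (intro card_mono) auto
  also have "\<dots> \<le> card (class_edges C1) + card (class_edges C2)" by (rule card_Un_le)
  finally show ?thesis .
qed

text \<open>An edge at a vertex of free_A avoids the images of the apex set unless it meets
  mapped_to X itself or one of its new vertices is mapped into X.\<close>
lemma sum_deg_free_A_le:
  "(\<Sum>x\<in>free_A. deg E x) \<le> card free_edges + card apex_hit_edges + card apex_link_edges"
proof -
  have "(\<Sum>x\<in>free_A. deg E x) = card (\<Union>x\<in>free_A. {e \<in> E. x \<in> e})"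
    unfolding deg_eq_card_incident_edges[OF graph]
    by (rule card_UN_disjoint[symmetric, OF finite_free_A])
      (use finite_E edge_A_unique free_A_subset in fastforce)+
  also have "\<dots> \<le> card (free_edges \<union> apex_hit_edges \<union> apex_link_edges)"
    using finite_free_edges finite_apex_hit_edges finite_apex_link_edges
    unfolding free_edges_def apex_hit_edges_def apex_link_edges_def
    by (intro card_mono) auto
  also have "\<dots> \<le> card free_edges + card apex_hit_edges + card apex_link_edges"
    by (meson card_Un_le add_right_mono order_trans)
  finally show ?thesis .
qed

lemma apex_link_edges_subset: "apex_link_edges \<subseteq> edges_in E (free_A \<union> (mapped_to X \<inter> B))"
proof
  fix e assume e: "e \<in> apex_link_edges"
  then have eE: "e \<in> E" unfolding apex_link_edges_def by blast
  obtain u w where uw: "e = {u, w}" "u \<in> A" "w \<in> B" using edge_A_B[OF eE] by blast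
  have "u \<in> free_A" using e uw free_A_subset A_B unfolding apex_link_edges_def by auto
  moreover have "w \<in> mapped_to X"
    using e uw calculation unfolding apex_link_edges_def free_A_def by auto
  ultimately show "e \<in> edges_in E (free_A \<union> (mapped_to X \<inter> B))"
    using uw eE unfolding edges_in_def by auto
qed

lemma card_class_edges_at_B:
  "card (\<Union>v\<in>mapped_to C \<inter> B. {e \<in> class_edges C. v \<in> e})
    = (\<Sum>v\<in>mapped_to C \<inter> B. class_degree C v)"
  unfolding class_degree_def
proof (rule card_UN_disjoint)
  show "finite (mapped_to C \<inter> B)" using finite_mapped_to by simp
  show "\<forall>v\<in>mapped_to C \<inter> B. finite {e \<in> class_edges C. v \<in> e}" using finite_class_edges by simp
  show "\<forall>v\<in>mapped_to C \<inter> B. \<forall>v'\<in>mapped_to C \<inter> B. v \<noteq> v' \<longrightarrow>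
      {e \<in> class_edges C. v \<in> e} \<inter> {e \<in> class_edges C. v' \<in> e} = {}"
    using edge_B_unique class_edges_subset by blast
qed

text \<open>The A-end of a class edge is not mapped into X, since its clique avoids X.\<close>
lemma class_edges_at_B_subset:
  "(\<Union>v\<in>mapped_to C \<inter> B. {e \<in> class_edges C. v \<in> e}) \<subseteq> edges_in E (free_A \<union> (mapped_to C \<inter> B))"
proof
  fix e assume "e \<in> (\<Union>v\<in>mapped_to C \<inter> B. {e \<in> class_edges C. v \<in> e})"
  then obtain v where v: "v \<in> mapped_to C \<inter> B" "e \<in> class_edges C" "v \<in> e" by blast
  then have eE: "e \<in> E" using class_edges_subset by blast
  obtain u w where uw: "e = {u, w}" "u \<in> A" "w \<in> B" using edge_A_B[OF eE] by blast
  have "v = w" using uw v A_B by auto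
  moreover have "u \<notin> mapped_to X"
    using v(2) uw phi_in_host_clique[of u e] unfolding class_edges_def free_edges_def mapped_to_def
    by blast
  ultimately show "e \<in> edges_in E (free_A \<union> (mapped_to C \<inter> B))"
    using uw v eE unfolding edges_in_def free_A_def by auto
qed

text \<open>The class edges at the B-vertices of mapped_to C, the edges inside free_A and the edges
  to a set Y of B-vertices mapped into X all lie in a forest on free_A, mapped_to C \<inter> B and Y.\<close>
lemma sum_class_degree_B_le:
  assumes Y: "Y \<subseteq> mapped_to X \<inter> B" and "free_A \<noteq> {}" and "X \<inter> C = {}"
  shows "(\<Sum>v\<in>mapped_to C \<inter> B. class_degree C v) + card (edges_in E (free_A \<union> Y)) + 1
    \<le> card free_A + card (mapped_to C \<inter> B) + card Y"
proof -
  define RB where "RB = mapped_to C \<inter> B"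
  define G1 where "G1 = (\<Union>v\<in>RB. {e \<in> class_edges C. v \<in> e})"
  define G2 where "G2 = edges_in E (free_A \<union> Y)"
  have G1_subset: "G1 \<subseteq> edges_in E (free_A \<union> RB)"
    using class_edges_at_B_subset unfolding G1_def RB_def .
  have disj: "G1 \<inter> G2 = {}"
  proof -
    have "RB \<inter> (free_A \<union> Y) = {}"
      using Y assms(3) free_A_subset A_B unfolding RB_def mapped_to_def by blast
    then show ?thesis unfolding G1_def G2_def edges_in_def by blast
  qed
  have "card G1 + card G2 \<le> card (edges_in E (free_A \<union> RB \<union> Y))"
  proof -
    have "finite G1" using G1_subset finite_edges_in finite_subset by blast
    then have "card G1 + card G2 = card (G1 \<union> G2)"
      using disj finite_edges_in unfolding G2_def by (simp add: card_Un_disjoint)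
    also have "\<dots> \<le> card (edges_in E (free_A \<union> RB \<union> Y))"
      using G1_subset finite_edges_in unfolding G2_def edges_in_def by (intro card_mono) auto
    finally show ?thesis .
  qed
  moreover have "card (edges_in E (free_A \<union> RB \<union> Y)) + 1 \<le> card (free_A \<union> RB \<union> Y)"
    using free_A_subset A_B mapped_to_subset Y assms(2) unfolding RB_def
    by (intro card_edges_in_forest[OF graph acyclic]) auto
  ultimately have "card G1 + card G2 + 1 \<le> card (free_A \<union> RB \<union> Y)" by linarith
  also have "\<dots> \<le> card free_A + card RB + card Y"
    by (meson card_Un_le add_right_mono order_trans)
  finally show ?thesis using card_class_edges_at_B unfolding G1_def RB_def G2_def by simp
qed

end

text \<open>Here k bounds the degrees on A from below; the size conditions on C1 and C2 hold for the
  graphs embedded in both families.\<close>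
locale bounded_host = host_embedding V E p VG EG f A B X C1 C2
  for V :: "'a set" and E p VG EG and f :: "'a + 'a set \<times> nat \<Rightarrow> 'b" and A B X C1 C2 +
  fixes k :: nat
  assumes k_ge_2: "2 \<le> k" and deg_A: "\<forall>x\<in>A. k \<le> deg E x" and card_X_less: "card X < card A"
    and class_degree_bound: "\<forall>u\<in>C1 \<union> C2. card {w \<in> C1 \<union> C2. w \<noteq> u \<and> {u, w} \<in> EG} \<le> k - 1"
    and class_sizes: "(card C1 - 1) + (card C2 - 1) \<le> 2 * k - 2"
    and class_halves: "card C1 div 2 + card C2 div 2 \<le> k - 1"
begin

lemma class_degree_le_k:
  assumes "C \<in> {C1, C2}" "v \<in> mapped_to C"
  shows "class_degree C v \<le> k - 1"
proof -
  have fin: "finite C" "finite (C1 \<union> C2)" using assms(1) finite_C1 finite_C2 by auto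
  have "phi v \<in> C1 \<union> C2" using assms unfolding mapped_to_def by blast
  then have "card {w \<in> C1 \<union> C2. w \<noteq> phi v \<and> {phi v, w} \<in> EG} \<le> k - 1"
    using class_degree_bound by blast
  moreover have "card {w \<in> C. w \<noteq> phi v \<and> {phi v, w} \<in> EG}
      \<le> card {w \<in> C1 \<union> C2. w \<noteq> phi v \<and> {phi v, w} \<in> EG}"
    using assms(1) fin(2) by (intro card_mono) auto
  ultimately show ?thesis using class_degree_le[OF fin(1) assms(2)] by linarith
qed

lemma card_A_eq: "card A = card (mapped_to X \<inter> A) + card free_A"
proof -
  have "A = (mapped_to X \<inter> A) \<union> free_A" "(mapped_to X \<inter> A) \<inter> free_A = {}"
    unfolding free_A_def by blast+
  then show ?thesis using finite_A finite_free_A by (metis card_Un_disjoint finite_Int)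
qed

lemma card_free_A_gt: "card (mapped_to X \<inter> B) + card apex_hit_edges < card free_A"
  using card_mapped_to_apex_add_card_apex_hit_edges card_split_A_B[OF mapped_to_subset, of X]
    card_A_eq card_X_less by linarith

lemma free_A_nonempty: "free_A \<noteq> {}"
  using card_free_A_gt by auto

lemma card_apex_link_edges_le:
  "card apex_link_edges + 1 \<le> card free_A + card (mapped_to X \<inter> B)"
proof -
  have "free_A \<union> (mapped_to X \<inter> B) \<subseteq> V" using free_A_subset A_B by blast
  then have "card (edges_in E (free_A \<union> (mapped_to X \<inter> B))) + 1 \<le> card (free_A \<union> (mapped_to X \<inter> B))"
    using card_edges_in_forest[OF graph acyclic] free_A_nonempty by blast
  moreover have "card apex_link_edges \<le> card (edges_in E (free_A \<union> (mapped_to X \<inter> B)))"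
    using apex_link_edges_subset finite_edges_in by (rule card_mono[rotated])
  moreover have "card (free_A \<union> (mapped_to X \<inter> B)) \<le> card free_A + card (mapped_to X \<inter> B)"
    by (rule card_Un_le)
  ultimately show ?thesis by linarith
qed

lemma sum_deg_free_A_le_free_edges:
  "(\<Sum>x\<in>free_A. deg E x) + 2 \<le> card free_edges + 2 * card free_A"
  using sum_deg_free_A_le card_apex_link_edges_le card_free_A_gt by linarith

lemma sum_deg_free_A_ge: "k * card free_A \<le> (\<Sum>x\<in>free_A. deg E x)"
  using sum_bounded_below[of free_A k "deg E"] deg_A free_A_subset by (auto simp: mult.commute)

lemma card_free_edges_le_2k: "card free_edges \<le> 2 * k - 2"
  using card_free_edges_le card_class_edges_le[OF finite_C1] card_class_edges_le[OF finite_C2]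
    class_sizes by fastforce

lemma free_edge_meets_free_A:
  assumes "e \<in> free_edges"
  obtains x where "x \<in> e" "x \<in> free_A"
proof -
  have eE: "e \<in> E" using assms unfolding free_edges_def by blast
  obtain u w where uw: "e = {u, w}" "u \<in> A" using edge_A_B[OF eE] by blast
  have "phi u \<notin> X" using assms phi_in_host_clique[of u e] uw(1) unfolding free_edges_def by blast
  then have "u \<in> free_A" using uw(2) unfolding free_A_def mapped_to_def by blast
  then show ?thesis using that uw(1) by blast
qed

text \<open>In class_edges_count each A-vertex of mapped_to C contributes up to k - 1 to the sum of class
  degrees but also 1 to card (mapped_to C).\<close>
lemma two_card_class_edges_le:
  assumes C: "C \<in> {C1, C2}"
    and B_part: "(\<Sum>v\<in>mapped_to C \<inter> B. class_degree C v) \<le> card (mapped_to C \<inter> B)"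
  shows "2 * card (class_edges C) \<le> card C + card (mapped_to C \<inter> A) * (k - 2)"
proof -
  let ?RA = "mapped_to C \<inter> A" and ?RB = "mapped_to C \<inter> B"
  have "(\<Sum>v\<in>?RA. class_degree C v) \<le> card ?RA * (k - 1)"
    using sum_bounded_above[of ?RA "class_degree C" "k - 1"] class_degree_le_k[OF C] by auto
  moreover have "card ?RA * (k - 1) = card ?RA * (k - 2) + card ?RA"
    using k_ge_2 by (simp add: algebra_simps flip: mult_Suc_right)
  moreover have "finite C" using C finite_C1 finite_C2 by blast
  ultimately show ?thesis
    using class_edges_count[of C] B_part card_split_A_B[OF mapped_to_subset, of C]
      sum_split_A_B[OF mapped_to_subset, of "class_degree C" C] by linarith
qed

lemma k_ge_3: "3 \<le> k"
proof (rule ccontr)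
  assume "\<not> 3 \<le> k"
  then have k: "k = 2" using k_ge_2 by linarith
  have half: "card (class_edges C) \<le> card C div 2" if C: "C \<in> {C1, C2}" for C
  proof -
    have "\<forall>v\<in>mapped_to C \<inter> B. class_degree C v \<le> 1" using class_degree_le_k[OF C] k by simp
    then have "(\<Sum>v\<in>mapped_to C \<inter> B. class_degree C v) \<le> card (mapped_to C \<inter> B)"
      using sum_bounded_above[of "mapped_to C \<inter> B" "class_degree C" 1] by simp
    then have "2 * card (class_edges C) \<le> card C" using two_card_class_edges_le[OF C] k by simp
    then show ?thesis by presburger
  qed
  have "card free_edges \<le> 1"
    using card_free_edges_le half[of C1] half[of C2] class_halves k by simp
  then show False
    using sum_deg_free_A_le_free_edges sum_deg_free_A_ge unfolding k by linarith
qed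

lemma card_free_A_le_2: "card free_A \<le> 2"
proof (rule ccontr)
  assume "\<not> card free_A \<le> 2"
  then have "3 \<le> card free_A" by simp
  then obtain j where j: "card free_A = 3 + j" using le_iff_add by blast
  obtain i where i: "k = 3 + i" using le_iff_add k_ge_3 by blast
  have "k * card free_A + 2 \<le> 2 * k - 2 + 2 * card free_A"
    using sum_deg_free_A_ge sum_deg_free_A_le_free_edges card_free_edges_le_2k by linarith
  then show False unfolding i j by (simp add: algebra_simps)
qed

lemma card_free_edges_le_at_class_vertex:
  assumes C: "C \<in> {C1, C2}" "x \<in> mapped_to C" and at_x: "\<forall>e\<in>free_edges. x \<in> e"
  shows "card free_edges \<le> k - 1"
proof -
  have "free_edges \<subseteq> {e \<in> class_edges C. x \<in> e}"
  proof
    fix e assume e: "e \<in> free_edges"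
    have "C = C1 \<Longrightarrow> e \<notin> class_edges C2" "C = C2 \<Longrightarrow> e \<notin> class_edges C1"
      using C(2) at_x e class_edges_avoid_C1 class_edges_avoid_C2 by blast+
    then have "e \<in> class_edges C" using C(1) free_edge_class_edges[OF e] by blast
    then show "e \<in> {e \<in> class_edges C. x \<in> e}" using at_x e by simp
  qed
  then have "card free_edges \<le> class_degree C x"
    unfolding class_degree_def using finite_class_edges by (intro card_mono) auto
  then show ?thesis using class_degree_le_k[OF C] by linarith
qed

lemma card_free_A_ne_1: "card free_A \<noteq> 1"
proof
  assume n: "card free_A = 1"
  then obtain x where x: "free_A = {x}" by (rule card_1_singletonE)
  have "card (mapped_to X \<inter> B) = 0" "card apex_hit_edges = 0"
    using card_free_A_gt n by linarith+
  moreover have "card apex_link_edges = 0"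
    using card_apex_link_edges_le n calculation by linarith
  moreover have "k \<le> deg E x" using deg_A free_A_subset x by blast
  ultimately have "k \<le> card free_edges" using sum_deg_free_A_le x by simp
  have at_x: "\<forall>e\<in>free_edges. x \<in> e"
  proof
    fix e assume e: "e \<in> free_edges"
    obtain y where "y \<in> e" "y \<in> free_A" by (rule free_edge_meets_free_A[OF e])
    then show "x \<in> e" using x by simp
  qed
  have half: "card (class_edges C) \<le> card C div 2" if C: "C \<in> {C1, C2}" "x \<notin> mapped_to C" for C
  proof -
    have "X \<inter> C = {}" using C(1) X_C1_disjoint X_C2_disjoint by blast
    then have "mapped_to C \<inter> A \<subseteq> free_A"
      using mapped_to_classes_apex_disjoint unfolding free_A_def by blast
    then have "mapped_to C \<inter> A = {}" using C(2) unfolding x by blast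
    moreover have "(\<Sum>v\<in>mapped_to C \<inter> B. class_degree C v) \<le> card (mapped_to C \<inter> B)"
      using sum_class_degree_B_le[of "{}" C] free_A_nonempty \<open>X \<inter> C = {}\<close> n by simp
    ultimately have "2 * card (class_edges C) \<le> card C"
      using two_card_class_edges_le[OF C(1)] by simp
    then show ?thesis by presburger
  qed
  have "card free_edges \<le> k - 1"
  proof (cases "x \<in> mapped_to C1 \<or> x \<in> mapped_to C2")
    case True
    then show ?thesis using card_free_edges_le_at_class_vertex[OF _ _ at_x] by blast
  next
    case False
    then show ?thesis using card_free_edges_le half[of C1] half[of C2] class_halves by simp
  qed
  then show False using \<open>k \<le> card free_edges\<close> k_ge_2 by linarith
qed

lemma card_free_A_eq_2: "card free_A = 2"
proof -
  have "card free_A \<noteq> 0" using free_A_nonempty finite_free_A by simp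
  then show ?thesis using card_free_A_le_2 card_free_A_ne_1 by linarith
qed

lemma apex_hit_add_link_le_1:
  assumes pair: "free_A = {x1, x2}"
    and no_common: "\<not> (\<exists>y\<in>mapped_to X \<inter> B. {x1, y} \<in> E \<and> {x2, y} \<in> E)"
  shows "card apex_hit_edges + card apex_link_edges \<le> 1"
proof (cases "mapped_to X \<inter> B = {}")
  case True
  have "apex_link_edges \<subseteq> edges_in E free_A" using apex_link_edges_subset True by simp
  also have "edges_in E free_A = {}"
    using free_A_subset A_B unfolding edges_in_def by (auto elim!: edge_A_B)
  finally show ?thesis using card_free_A_gt card_free_A_eq_2 by simp
next
  case False
  then have "card (mapped_to X \<inter> B) \<noteq> 0" using finite_mapped_to by simp
  then have "card (mapped_to X \<inter> B) = 1" "card apex_hit_edges = 0"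
    using card_free_A_gt card_free_A_eq_2 by linarith+
  then obtain y where y: "mapped_to X \<inter> B = {y}" using card_1_singletonE by blast
  have "apex_link_edges \<subseteq> {{x1, y}, {x2, y}} \<inter> E"
  proof
    fix e assume e: "e \<in> apex_link_edges"
    then have "e \<in> E" "e \<subseteq> {x1, x2, y}"
      using apex_link_edges_subset pair y unfolding edges_in_def by auto
    then obtain u w where uw: "e = {u, w}" "u \<in> A" "w \<in> B" "e \<in> E" "e \<subseteq> {x1, x2, y}"
      using edge_A_B by metis
    have "x1 \<in> A" "x2 \<in> A" "y \<in> B" using pair y free_A_subset by auto
    then have "w = y" "u = x1 \<or> u = x2" using uw A_B by auto
    then show "e \<in> {{x1, y}, {x2, y}} \<inter> E" using uw by auto
  qed
  moreover have "y \<in> mapped_to X \<inter> B" using y by simp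
  then have "{x1, y} \<notin> E \<or> {x2, y} \<notin> E" using no_common by blast
  ultimately have "apex_link_edges \<subseteq> {{x1, y}} \<or> apex_link_edges \<subseteq> {{x2, y}}" by auto
  then have "card apex_link_edges \<le> 1"
    using card_mono[of "{{x1, y}}" apex_link_edges] card_mono[of "{{x2, y}}" apex_link_edges]
      by auto
  then show ?thesis using \<open>card apex_hit_edges = 0\<close> by simp
qed

lemma free_A_pair:
  obtains x1 x2 y where "free_A = {x1, x2}" "x1 \<noteq> x2" "deg E x1 = k" "deg E x2 = k"
    "y \<in> mapped_to X \<inter> B" "{x1, y} \<in> E" "{x2, y} \<in> E"
proof -
  obtain x1 x2 where pair: "free_A = {x1, x2}" "x1 \<noteq> x2"
    using card_free_A_eq_2 by (meson card_2_iff)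
  have deg: "k \<le> deg E x1" "k \<le> deg E x2" using deg_A free_A_subset pair by auto
  have sum: "(\<Sum>x\<in>free_A. deg E x) = deg E x1 + deg E x2" using pair by simp
  have "\<exists>y\<in>mapped_to X \<inter> B. {x1, y} \<in> E \<and> {x2, y} \<in> E"
  proof (rule ccontr)
    assume "\<not> ?thesis"
    then have "card apex_hit_edges + card apex_link_edges \<le> 1"
      by (rule apex_hit_add_link_le_1[OF pair(1)])
    then show False using sum_deg_free_A_le card_free_edges_le_2k sum deg k_ge_2 by linarith
  qed
  moreover have "deg E x1 = k" "deg E x2 = k"
    using sum_deg_free_A_le_free_edges card_free_edges_le_2k card_free_A_eq_2 sum deg k_ge_2
    by linarith+
  ultimately show ?thesis using that pair by blast
qed

lemma card_free_edges_ge: "2 * k - 2 \<le> card free_edges"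
  using sum_deg_free_A_le_free_edges sum_deg_free_A_ge unfolding card_free_A_eq_2 by linarith

lemma two_card_class_edges_le_pair:
  assumes C: "C \<in> {C1, C2}"
  shows "2 * card (class_edges C) \<le> card C + card (mapped_to C \<inter> A) * (k - 2)"
proof -
  obtain x1 x2 y where pair: "free_A = {x1, x2}" "x1 \<noteq> x2"
    and y: "y \<in> mapped_to X \<inter> B" "{x1, y} \<in> E" "{x2, y} \<in> E"
    by (rule free_A_pair)
  have "{{x1, y}, {x2, y}} \<subseteq> edges_in E (free_A \<union> {y})"
    using pair y unfolding edges_in_def by auto
  moreover have "{x1, y} \<noteq> {x2, y}" using pair(2) by (metis doubleton_eq_iff)
  ultimately have "2 \<le> card (edges_in E (free_A \<union> {y}))"
    using finite_edges_in by (metis card_2_iff card_mono)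
  moreover have "X \<inter> C = {}" using C X_C1_disjoint X_C2_disjoint by blast
  ultimately have "(\<Sum>v\<in>mapped_to C \<inter> B. class_degree C v) \<le> card (mapped_to C \<inter> B)"
    using sum_class_degree_B_le[of "{y}" C] y(1) free_A_nonempty card_free_A_eq_2 by simp
  then show ?thesis by (rule two_card_class_edges_le[OF C])
qed

lemma card_mapped_to_classes_A: "card (mapped_to C1 \<inter> A) + card (mapped_to C2 \<inter> A) \<le> 2"
proof -
  have "(mapped_to C1 \<inter> A) \<union> (mapped_to C2 \<inter> A) \<subseteq> free_A"
    using mapped_to_classes_apex_disjoint X_C1_disjoint X_C2_disjoint unfolding free_A_def by blast
  moreover have "(mapped_to C1 \<inter> A) \<inter> (mapped_to C2 \<inter> A) = {}"
    using C1_C2_disjoint unfolding mapped_to_def by blast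
  ultimately show ?thesis using card_free_A_eq_2 finite_free_A finite_mapped_to
    by (metis card_Un_disjoint card_mono finite_Int)
qed

text \<open>Summing the bounds for the two classes: at least 2k - 2 free edges must be paid for by
  the classes, with an extra k - 2 for each of the at most two A-vertices mapped into them.\<close>
theorem card_classes_ge: "2 * k \<le> card C1 + card C2"
proof -
  have "4 * k - 4
      \<le> card C1 + card C2 + (card (mapped_to C1 \<inter> A) + card (mapped_to C2 \<inter> A)) * (k - 2)"
    using card_free_edges_ge card_free_edges_le
      two_card_class_edges_le_pair[of C1] two_card_class_edges_le_pair[of C2]
    by (simp add: algebra_simps)
  moreover have "(card (mapped_to C1 \<inter> A) + card (mapped_to C2 \<inter> A)) * (k - 2) \<le> 2 * (k - 2)"
    using card_mapped_to_classes_A by (rule mult_right_mono) simp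
  ultimately show ?thesis using k_ge_3 by linarith
qed

text \<open>For even k the bounds of the two classes lose a half each to rounding, which is too much.\<close>
theorem odd_k: "odd k"
proof (rule ccontr)
  assume "\<not> odd k"
  define t1 where "t1 = card (mapped_to C1 \<inter> A) * (k - 2)"
  define t2 where "t2 = card (mapped_to C2 \<inter> A) * (k - 2)"
  have "even t1" "even t2" using \<open>\<not> odd k\<close> k_ge_2 unfolding t1_def t2_def by auto
  moreover have "2 * card (class_edges C1) \<le> card C1 + t1"
    "2 * card (class_edges C2) \<le> card C2 + t2"
    using two_card_class_edges_le_pair unfolding t1_def t2_def by auto
  ultimately have "card (class_edges C1) \<le> card C1 div 2 + t1 div 2"
    "card (class_edges C2) \<le> card C2 div 2 + t2 div 2"
    by presburger+
  moreover have "t1 + t2 \<le> 2 * (k - 2)"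
    using card_mapped_to_classes_A unfolding t1_def t2_def
    by (metis add_mult_distrib mult_right_mono zero_le)
  ultimately show False
    using card_free_edges_ge card_free_edges_le class_halves k_ge_3 by linarith
qed

text \<open>All neighbours of y other than x1, x2 lie in A outside free_A, so their images are apex
  vertices adjacent to the apex vertex phi y.\<close>
theorem apex_neighbour_pair:
  obtains x1 x2 y where "x1 \<in> A" "x2 \<in> A" "x1 \<noteq> x2" "deg E x1 = k" "deg E x2 = k"
    "y \<in> B" "{x1, y} \<in> E" "{x2, y} \<in> E" "phi y \<in> X"
    "deg E y \<le> card {w \<in> X. w \<noteq> phi y \<and> {phi y, w} \<in> EG} + 2"
proof -
  obtain x1 x2 y where pair: "free_A = {x1, x2}" "x1 \<noteq> x2" "deg E x1 = k" "deg E x2 = k"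
    and y: "y \<in> mapped_to X \<inter> B" "{x1, y} \<in> E" "{x2, y} \<in> E"
    by (rule free_A_pair)
  define N where "N = nbrs E y - {x1, x2}"
  have N_subset: "N \<subseteq> V" unfolding N_def nbrs_def using is_graph_edgeD(2)[OF graph] by blast
  have yV: "y \<in> V" "phi y \<in> X" using y unfolding mapped_to_def by auto
  have "phi ` N \<subseteq> {w \<in> X. w \<noteq> phi y \<and> {phi y, w} \<in> EG}"
  proof
    fix z assume "z \<in> phi ` N"
    then obtain x where x: "x \<in> N" "z = phi x" by blast
    have xy: "{x, y} \<in> E" using x unfolding N_def nbrs_def by blast
    obtain u w where uw: "{x, y} = {u, w}" "u \<in> A" "w \<in> B" by (rule edge_A_B[OF xy])
    have "x \<in> A"
      using uw y(1) A_B(2) by (metis IntD2 disjoint_iff doubleton_eq_iff)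
    then have "x \<noteq> y" using y(1) A_B(2) by blast
    have "phi x \<in> X"
      using \<open>x \<in> A\<close> x(1) N_subset pair(1) unfolding N_def free_A_def mapped_to_def by blast
    moreover have "phi x \<noteq> phi y"
      using inj_on_contraD[OF phi_inj \<open>x \<noteq> y\<close>] x(1) N_subset yV(1) by blast
    moreover have "{phi y, phi x} \<in> EG"
      using host_clique_edge[OF xy phi_in_host_clique phi_in_host_clique] calculation(2) by simp
    ultimately show "z \<in> {w \<in> X. w \<noteq> phi y \<and> {phi y, w} \<in> EG}" using x(2) by simp
  qed
  then have "card (phi ` N) \<le> card {w \<in> X. w \<noteq> phi y \<and> {phi y, w} \<in> EG}"
    using finite_X by (intro card_mono) auto
  moreover have "card (phi ` N) = card N"
    using card_image[OF inj_on_subset[OF phi_inj N_subset]] .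
  moreover have "deg E y - 2 \<le> card N"
    unfolding N_def deg_def using diff_card_le_card_Diff[of "{x1, x2}" "nbrs E y"] pair(2) by simp
  ultimately have "deg E y \<le> card {w \<in> X. w \<noteq> phi y \<and> {phi y, w} \<in> EG} + 2" by linarith
  moreover have "x1 \<in> A" "x2 \<in> A" using pair(1) free_A_subset by auto
  ultimately show ?thesis using that pair y yV(2) by blast
qed

end

section \<open>The families H1 and H2\<close>

definition join_edges :: "nat \<Rightarrow> (nat \<Rightarrow> 'b set) \<Rightarrow> 'b set \<Rightarrow> 'b set \<Rightarrow> 'b set set" where
  "join_edges p P X VG = {{u, v} | u v. u \<in> X \<and> v \<in> VG - X} \<union>
     {{u, v} | u v i i'. i < p \<and> i' < p \<and> i \<noteq> i' \<and> u \<in> P i \<and> v \<in> P i'}"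

lemma join_edges_not_in_part:
  assumes disj: "\<forall>i<p. \<forall>i'<p. i \<noteq> i' \<longrightarrow> P i \<inter> P i' = {}" and parts: "(\<Union>i<p. P i) = VG - X"
    and "i < p" "u \<in> P i" "v \<in> P i"
  shows "{u, v} \<notin> join_edges p P X VG"
proof
  assume "{u, v} \<in> join_edges p P X VG"
  moreover have "u \<notin> X" "v \<notin> X" using assms parts by blast+
  ultimately obtain u' v' i1 i2 where uv': "{u, v} = {u', v'}" "i1 < p" "i2 < p" "i1 \<noteq> i2"
      "u' \<in> P i1" "v' \<in> P i2"
    unfolding join_edges_def by (auto simp: doubleton_eq_iff)
  have "i1 = i" "i2 = i" if "u' = u" "v' = v"
    using that uv' disj assms(3-5) by blast+
  moreover have "i1 = i" "i2 = i" if "u' = v" "v' = u"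
    using that uv' disj assms(3-5) by blast+
  ultimately show False using uv'(1,4) by (auto simp: doubleton_eq_iff)
qed

lemma join_edges_not_in_apex:
  assumes "u \<in> X" "v \<in> X" "(\<Union>i<p. P i) = VG - X"
  shows "{u, v} \<notin> join_edges p P X VG"
  using assms unfolding join_edges_def by (auto simp: doubleton_eq_iff)

lemma clique_two_in_part:
  assumes parts: "(\<Union>i<p. P i) = VG - X" and Q: "Q \<subseteq> VG" "Q \<inter> X = {}" "card Q = p + 1"
  obtains i u v where "i < p" "u \<in> Q" "v \<in> Q" "u \<noteq> v" "u \<in> P i" "v \<in> P i"
proof (rule ccontr)
  assume "\<not> thesis"
  note found = that
  have no_pair: "\<not> (u \<in> P i \<and> v \<in> P i)" if "i < p" "u \<in> Q" "v \<in> Q" "u \<noteq> v" for i u v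
    using found[OF that] \<open>\<not> thesis\<close> by blast
  have "card (Q \<inter> P i) \<le> 1" if "i < p" for i
  proof (rule ccontr)
    assume "\<not> card (Q \<inter> P i) \<le> 1"
    then have "2 \<le> card (Q \<inter> P i)" by simp
    then obtain Z where "Z \<subseteq> Q \<inter> P i" "card Z = 2" by (meson obtain_subset_with_card_n)
    then obtain u v where "u \<in> Q \<inter> P i" "v \<in> Q \<inter> P i" "u \<noteq> v" by (auto simp: card_2_iff)
    then show False using no_pair that by blast
  qed
  then have "(\<Sum>i<p. card (Q \<inter> P i)) \<le> (\<Sum>i<p. 1)" by (intro sum_mono) simp
  moreover have "Q = (\<Union>i<p. Q \<inter> P i)" using Q parts by blast
  then have "card Q \<le> (\<Sum>i<p. card (Q \<inter> P i))" by (metis card_UN_le finite_lessThan)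
  ultimately show False using Q(3) by simp
qed

lemma clique_has_part_edge:
  assumes disj: "\<forall>i<p. \<forall>i'<p. i \<noteq> i' \<longrightarrow> P i \<inter> P i' = {}" and parts: "(\<Union>i<p. P i) = VG - X"
    and EG: "EG = EXX \<union> EW \<union> join_edges p P X VG" and EXX: "\<forall>e\<in>EXX. e \<subseteq> X"
    and Q: "Q \<subseteq> VG" "card Q = p + 1" "\<forall>u\<in>Q. \<forall>v\<in>Q. u \<noteq> v \<longrightarrow> {u, v} \<in> EG" "Q \<inter> X = {}"
  obtains u v where "u \<in> Q" "v \<in> Q" "u \<noteq> v" "{u, v} \<in> EW"
proof -
  obtain i u v where uv: "i < p" "u \<in> Q" "v \<in> Q" "u \<noteq> v" "u \<in> P i" "v \<in> P i"
    using clique_two_in_part[OF parts Q(1,4,2)] .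
  have "{u, v} \<in> EG" using Q(3) uv(2-4) by blast
  moreover have "{u, v} \<notin> EXX" using EXX Q(4) uv(2) by blast
  moreover have "{u, v} \<notin> join_edges p P X VG"
    using join_edges_not_in_part[OF disj parts uv(1,5,6)] .
  ultimately have "{u, v} \<in> EW" using EG by blast
  then show ?thesis using that uv(2-4) by blast
qed

text \<open>What the counting argument of bounded_host needs from the graph embedded in a part.\<close>
definition admissible_split :: "nat \<Rightarrow> 'b set \<Rightarrow> 'b set set \<Rightarrow> 'b set \<Rightarrow> 'b set \<Rightarrow> bool" where
  "admissible_split k W EW C1 C2 \<longleftrightarrow> finite W \<and> W = C1 \<union> C2 \<and> C1 \<inter> C2 = {} \<and>
     (\<forall>e\<in>EW. e \<subseteq> C1 \<or> e \<subseteq> C2) \<and>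
     (\<forall>u\<in>W. card {w \<in> W. w \<noteq> u \<and> {u, w} \<in> EW} \<le> k - 1) \<and>
     (card C1 - 1) + (card C2 - 1) \<le> 2 * k - 2 \<and> card C1 div 2 + card C2 div 2 \<le> k - 1"

lemma admissible_split_edges: "admissible_split k W EW C1 C2 \<Longrightarrow> \<forall>e\<in>EW. e \<subseteq> W"
  unfolding admissible_split_def by blast

lemma in_familyE:
  assumes "in_family topg emb n p a VG EG"
  obtains X EXX P j W EW where "finite VG" "X \<subseteq> VG" "card X = a - 1"
    "\<forall>i<p. \<forall>i'<p. i \<noteq> i' \<longrightarrow> P i \<inter> P i' = {}" "(\<Union>i<p. P i) = VG - X"
    "topg X EXX" "j < p" "W \<subseteq> P j" "emb W EW" "EG = EXX \<union> EW \<union> join_edges p P X VG"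
proof -
  obtain X EXX P j W EW where facts: "finite VG" "X \<subseteq> VG" "card X = a - 1"
    "\<forall>i<p. \<forall>i'<p. i \<noteq> i' \<longrightarrow> P i \<inter> P i' = {}" "(\<Union>i<p. P i) = VG - X"
    "topg X EXX" "j < p" "W \<subseteq> P j" "emb W EW"
    and "EG = EXX \<union> EW \<union> {{u, v} | u v. u \<in> X \<and> v \<in> VG - X} \<union>
           {{u, v} | u v i i'. i < p \<and> i' < p \<and> i \<noteq> i' \<and> u \<in> P i \<and> v \<in> P i'}"
    using assms unfolding in_family_def by (elim exE conjE) blast
  then have "EG = EXX \<union> EW \<union> join_edges p P X VG"
    unfolding join_edges_def by (simp add: Un_assoc)
  with facts show ?thesis by (rule that)
qed

lemma part_edge_in_embedded_graph:
  assumes disj: "\<forall>i<p. \<forall>i'<p. i \<noteq> i' \<longrightarrow> P i \<inter> P i' = {}" and parts: "(\<Union>i<p. P i) = VG - X"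
    and EG: "EG = EXX \<union> EW \<union> join_edges p P X VG" and EXX: "\<forall>e\<in>EXX. e \<subseteq> X"
    and "j < p" "W \<subseteq> P j" "u \<in> W" "v \<in> W" "{u, v} \<in> EG"
  shows "{u, v} \<in> EW"
proof -
  have "u \<notin> X" using assms(5-7) parts by blast
  then have "{u, v} \<notin> EXX" using EXX by blast
  moreover have "{u, v} \<notin> join_edges p P X VG"
    using join_edges_not_in_part[OF disj parts] assms(5-8) by blast
  ultimately show ?thesis using EG assms(9) by blast
qed

lemma join_bounded_host:
  assumes tree: "is_tree V E" and "colour_classes V E A B" and "1 \<le> p" "2 \<le> k"
    and "\<forall>x\<in>A. k \<le> deg E x" "card X < card A" "finite VG" "X \<subseteq> VG"
    and disj: "\<forall>i<p. \<forall>i'<p. i \<noteq> i' \<longrightarrow> P i \<inter> P i' = {}" and parts: "(\<Union>i<p. P i) = VG - X"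
    and "j < p" "W \<subseteq> P j"
    and EG: "EG = EXX \<union> EW \<union> join_edges p P X VG" and EXX: "\<forall>e\<in>EXX. e \<subseteq> X"
    and C: "admissible_split k W EW C1 C2"
    and "inj_on f (blowup_V V E p)" "f ` blowup_V V E p \<subseteq> VG" "\<forall>e\<in>blowup_E V E p. f ` e \<in> EG"
  shows "bounded_host V E p VG EG f A B X C1 C2 k"
proof -
  have W: "finite W" "W = C1 \<union> C2" "C1 \<inter> C2 = {}"
    and EW: "\<forall>e\<in>EW. e \<subseteq> C1 \<or> e \<subseteq> C2"
    and deg_W: "\<forall>u\<in>W. card {w \<in> W. w \<noteq> u \<and> {u, w} \<in> EW} \<le> k - 1"
    using C unfolding admissible_split_def by blast+
  have "W \<inter> X = {}" using \<open>j < p\<close> \<open>W \<subseteq> P j\<close> parts by blast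
  note W_edge = part_edge_in_embedded_graph[OF disj parts EG EXX \<open>j < p\<close> \<open>W \<subseteq> P j\<close>]
  show ?thesis
  proof unfold_locales
    show "is_graph V E" "acyclic_graph V E" using tree unfolding is_tree_def by auto
    show "finite X" using \<open>finite VG\<close> \<open>X \<subseteq> VG\<close> finite_subset by blast
    show "finite C1" "finite C2" "C1 \<inter> C2 = {}" "X \<inter> C1 = {}" "X \<inter> C2 = {}"
      using W \<open>W \<inter> X = {}\<close> by auto
    show "\<exists>u\<in>Q. \<exists>v\<in>Q. u \<noteq> v \<and> u \<in> C1 \<union> C2 \<and> v \<in> C1 \<union> C2"
      if Q: "Q \<subseteq> VG" "card Q = p + 1" "\<forall>u\<in>Q. \<forall>v\<in>Q. u \<noteq> v \<longrightarrow> {u, v} \<in> EG" "Q \<inter> X = {}"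
      for Q
    proof -
      obtain u v where "u \<in> Q" "v \<in> Q" "u \<noteq> v" "{u, v} \<in> EW"
        by (rule clique_has_part_edge[OF disj parts EG EXX Q])
      then show ?thesis using EW W(2) by blast
    qed
    show "{u, v} \<notin> EG" if uv: "u \<in> C1" "v \<in> C2" for u v
    proof
      assume "{u, v} \<in> EG"
      then have "{u, v} \<in> EW" using W_edge uv W(2) by blast
      then have "{u, v} \<subseteq> C1 \<or> {u, v} \<subseteq> C2" using EW by blast
      then show False using uv W(3) by blast
    qed
    show "\<forall>u\<in>C1 \<union> C2. card {w \<in> C1 \<union> C2. w \<noteq> u \<and> {u, w} \<in> EG} \<le> k - 1"
    proof
      fix u assume "u \<in> C1 \<union> C2"
      then have "card {w \<in> W. w \<noteq> u \<and> {u, w} \<in> EG} \<le> card {w \<in> W. w \<noteq> u \<and> {u, w} \<in> EW}"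
        using W W_edge by (intro card_mono) auto
      moreover have "card {w \<in> W. w \<noteq> u \<and> {u, w} \<in> EW} \<le> k - 1"
        using deg_W \<open>u \<in> C1 \<union> C2\<close> W(2) by blast
      ultimately show "card {w \<in> C1 \<union> C2. w \<noteq> u \<and> {u, w} \<in> EG} \<le> k - 1"
        unfolding W(2) by linarith
    qed
  qed (use assms in \<open>auto simp: admissible_split_def\<close>)
qed

lemma in_family_bounded_host:
  assumes tree: "is_tree V E" and col: "colour_classes V E A B" and "3 \<le> p" "2 \<le> k"
    and deg_A: "\<forall>x\<in>A. k \<le> deg E x" and "A \<noteq> {}"
    and fam: "in_family topg emb n p (card A) VG EG"
    and top: "\<And>X EXX. topg X EXX \<Longrightarrow> \<forall>e\<in>EXX. e \<subseteq> X"
    and split: "\<And>W EW. emb W EW \<Longrightarrow> \<exists>C1 C2. admissible_split k W EW C1 C2"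
    and sub: "subgraph_of (blowup_V V E p) (blowup_E V E p) VG EG"
  obtains f X EXX W EW C1 C2 where "bounded_host V E p VG EG f A B X C1 C2 k"
    "topg X EXX" "emb W EW" "admissible_split k W EW C1 C2"
    "\<forall>u\<in>X. \<forall>v\<in>X. {u, v} \<in> EG \<longrightarrow> {u, v} \<in> EXX"
proof -
  obtain X EXX P j W EW where VG: "finite VG" "X \<subseteq> VG" "card X = card A - 1"
    and disj: "\<forall>i<p. \<forall>i'<p. i \<noteq> i' \<longrightarrow> P i \<inter> P i' = {}" and parts: "(\<Union>i<p. P i) = VG - X"
    and "topg X EXX" "j < p" "W \<subseteq> P j" "emb W EW" and EG: "EG = EXX \<union> EW \<union> join_edges p P X VG"
    by (rule in_familyE[OF fam])
  obtain C1 C2 where C: "admissible_split k W EW C1 C2" using split \<open>emb W EW\<close> by blast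
  obtain f where f: "inj_on f (blowup_V V E p)" "f ` blowup_V V E p \<subseteq> VG"
      "\<forall>e\<in>blowup_E V E p. f ` e \<in> EG"
    using sub unfolding subgraph_of_def by blast
  have "finite A" using col tree finite_subset unfolding colour_classes_def is_tree_def is_graph_def
    by (metis Un_upper1)
  then have "card X < card A" using VG(3) \<open>A \<noteq> {}\<close> by (simp add: card_gt_0_iff)
  moreover have "1 \<le> p" using \<open>3 \<le> p\<close> by simp
  ultimately have "bounded_host V E p VG EG f A B X C1 C2 k"
    using join_bounded_host[OF tree col _ \<open>2 \<le> k\<close> deg_A _ VG(1,2) disj parts \<open>j < p\<close> \<open>W \<subseteq> P j\<close>
        EG top[OF \<open>topg X EXX\<close>] C f] by blast
  moreover have "\<forall>u\<in>X. \<forall>v\<in>X. {u, v} \<in> EG \<longrightarrow> {u, v} \<in> EXX"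
  proof (intro ballI impI)
    fix u v assume uv: "u \<in> X" "v \<in> X" "{u, v} \<in> EG"
    have "W \<inter> X = {}" using \<open>j < p\<close> \<open>W \<subseteq> P j\<close> parts by blast
    then have "{u, v} \<notin> EW" using admissible_split_edges[OF C] uv(1) by blast
    then show "{u, v} \<in> EXX" using EG uv join_edges_not_in_apex[OF uv(1,2) parts] by blast
  qed
  ultimately show ?thesis using that \<open>topg X EXX\<close> \<open>emb W EW\<close> C by blast
qed

lemma almost_regular_card_adjacent_le:
  assumes "almost_regular d W EW" "u \<in> W"
  shows "card {w \<in> Z. w \<noteq> u \<and> {u, w} \<in> EW} \<le> d"
proof -
  have g: "is_graph W EW" and "deg EW u \<le> d" using assms unfolding almost_regular_def by auto
  moreover have "{w \<in> Z. w \<noteq> u \<and> {u, w} \<in> EW} \<subseteq> nbrs EW u"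
    unfolding nbrs_def by (auto simp: insert_commute)
  ultimately show ?thesis
    using card_mono[OF finite_nbrs[OF g]] unfolding deg_def by (meson le_trans)
qed

lemma almost_regular_edges: "almost_regular d X EXX \<Longrightarrow> \<forall>e\<in>EXX. e \<subseteq> X"
  using is_graph_edge_subset unfolding almost_regular_def by blast

lemma complete_edges_subset: "e \<in> complete_edges Z \<Longrightarrow> e \<subseteq> Z"
  unfolding complete_edges_def by blast

lemma edges_within_complete: "EXX = complete_edges X \<Longrightarrow> \<forall>e\<in>EXX. e \<subseteq> X"
  using complete_edges_subset by blast

lemma card_adjacent_le_card_minus_1:
  assumes "finite Z" "u \<in> Z" "{w \<in> W. w \<noteq> u \<and> {u, w} \<in> EW} \<subseteq> Z"
  shows "card {w \<in> W. w \<noteq> u \<and> {u, w} \<in> EW} \<le> card Z - 1"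
proof -
  have "{w \<in> W. w \<noteq> u \<and> {u, w} \<in> EW} \<subseteq> Z - {u}" using assms(3) by blast
  then show ?thesis using assms(1,2) card_mono[of "Z - {u}"] by simp
qed

lemma admissible_split_card:
  "admissible_split k W EW C1 C2 \<Longrightarrow> card C1 + card C2 = card W"
  unfolding admissible_split_def by (metis card_Un_disjoint finite_Un)

lemma emb_L1_admissible_split:
  assumes "2 \<le> k" "emb_L1 k W EW"
  shows "admissible_split k W EW W {}"
proof -
  have ar: "almost_regular (k - 1) W EW" and card_W: "card W = 2 * k - 1"
    using assms(2) unfolding emb_L1_def by auto
  have g: "is_graph W EW" using ar unfolding almost_regular_def by simp
  have "card W - 1 \<le> 2 * k - 2" "card W div 2 \<le> k - 1" using card_W assms(1) by auto
  moreover have "\<forall>e\<in>EW. e \<subseteq> W" using is_graph_edge_subset[OF g] by blast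
  moreover have "finite W" using g unfolding is_graph_def by simp
  ultimately show ?thesis
    unfolding admissible_split_def using almost_regular_card_adjacent_le[OF ar] by auto
qed

lemma even_L2_admissible_split:
  assumes k: "2 \<le> k" "even k" and W: "W1 \<inter> W2 = {}"
    and W1: "card W1 = k + 1" "almost_regular (k - 1) W1 E1" and W2: "card W2 = k - 1"
  shows "admissible_split k (W1 \<union> W2) (E1 \<union> complete_edges W2) W1 W2"
proof -
  let ?W = "W1 \<union> W2" and ?EW = "E1 \<union> complete_edges W2"
  have g: "is_graph W1 E1" using W1(2) unfolding almost_regular_def by simp
  have fin: "finite W1" "finite W2" using W1(1) W2 k card.infinite by fastforce+
  have edges: "\<forall>e\<in>?EW. e \<subseteq> W1 \<or> e \<subseteq> W2"
    using is_graph_edge_subset[OF g] complete_edges_subset by blast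
  have deg: "card {w \<in> ?W. w \<noteq> u \<and> {u, w} \<in> ?EW} \<le> k - 1" if "u \<in> ?W" for u
  proof (cases "u \<in> W1")
    case True
    then have "{w \<in> ?W. w \<noteq> u \<and> {u, w} \<in> ?EW} = {w \<in> ?W. w \<noteq> u \<and> {u, w} \<in> E1}"
      using W complete_edges_subset by blast
    then show ?thesis using almost_regular_card_adjacent_le[OF W1(2) True, of ?W] by simp
  next
    case False
    then have "u \<in> W2" using that by blast
    have "{w \<in> ?W. w \<noteq> u \<and> {u, w} \<in> ?EW} \<subseteq> W2"
      using \<open>u \<in> W2\<close> W is_graph_edge_subset[OF g] complete_edges_subset by blast
    then have "card {w \<in> ?W. w \<noteq> u \<and> {u, w} \<in> ?EW} \<le> card W2 - 1"
      by (rule card_adjacent_le_card_minus_1[OF fin(2) \<open>u \<in> W2\<close>])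
    then show ?thesis using W2 by linarith
  qed
  have "(card W1 - 1) + (card W2 - 1) \<le> 2 * k - 2" "card W1 div 2 + card W2 div 2 \<le> k - 1"
    using W1(1) W2 k by presburger+
  then show ?thesis unfolding admissible_split_def using W fin edges deg by simp
qed

lemma odd_L2_admissible_split:
  assumes "odd k" "W1 \<inter> W2 = {}" "card W1 = k" "card W2 = k"
  shows "admissible_split k (W1 \<union> W2) (complete_edges W1 \<union> complete_edges W2) W1 W2"
proof -
  let ?W = "W1 \<union> W2" and ?EW = "complete_edges W1 \<union> complete_edges W2"
  have fin: "finite W1" "finite W2" using assms(1,3,4) card.infinite by fastforce+
  have edges: "\<forall>e\<in>?EW. e \<subseteq> W1 \<or> e \<subseteq> W2" using complete_edges_subset by blast
  have adj: "card {w \<in> ?W. w \<noteq> u \<and> {u, w} \<in> ?EW} \<le> card Wi - 1"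
    if "Wi \<in> {W1, W2}" "u \<in> Wi" for u Wi
  proof (rule card_adjacent_le_card_minus_1)
    show "finite Wi" "u \<in> Wi" using that fin by auto
    show "{w \<in> ?W. w \<noteq> u \<and> {u, w} \<in> ?EW} \<subseteq> Wi"
      using that assms(2) complete_edges_subset by blast
  qed
  have deg: "\<forall>u\<in>?W. card {w \<in> ?W. w \<noteq> u \<and> {u, w} \<in> ?EW} \<le> k - 1"
  proof
    fix u assume "u \<in> ?W"
    then consider "u \<in> W1" | "u \<in> W2" by blast
    then show "card {w \<in> ?W. w \<noteq> u \<and> {u, w} \<in> ?EW} \<le> k - 1"
      using adj[of W1 u] adj[of W2 u] assms(3,4) by cases simp_all
  qed
  have "(card W1 - 1) + (card W2 - 1) \<le> 2 * k - 2" "card W1 div 2 + card W2 div 2 \<le> k - 1"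
    using assms by presburger+
  then show ?thesis unfolding admissible_split_def using assms(2) fin edges deg by simp
qed

lemma emb_L2_admissible_split:
  assumes "2 \<le> k" "emb_L2 k W EW"
  shows "\<exists>C1 C2. admissible_split k W EW C1 C2"
proof -
  obtain W1 W2 E1 where W: "W = W1 \<union> W2" "W1 \<inter> W2 = {}"
    and sizes: "if even k
      then card W1 = k + 1 \<and> almost_regular (k - 1) W1 E1 \<and> card W2 = k - 1 \<and>
           EW = E1 \<union> complete_edges W2
      else card W1 = k \<and> card W2 = k \<and> EW = complete_edges W1 \<union> complete_edges W2"
    using assms(2) unfolding emb_L2_def by blast
  show ?thesis
  proof (cases "even k")
    case True
    then have "card W1 = k + 1" "almost_regular (k - 1) W1 E1" "card W2 = k - 1"
      "EW = E1 \<union> complete_edges W2"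
      using sizes by simp_all
    then have "admissible_split k W EW W1 W2"
      using even_L2_admissible_split[OF assms(1) True W(2)] W(1) by simp
    then show ?thesis by blast
  next
    case False
    then have "card W1 = k" "card W2 = k" "EW = complete_edges W1 \<union> complete_edges W2"
      using sizes by simp_all
    then have "admissible_split k W EW W1 W2"
      using odd_L2_admissible_split[OF False W(2)] W(1) by simp
    then show ?thesis by blast
  qed
qed

lemma H1_blowup_free:
  fixes V :: "'a set" and VG :: "'b set"
  assumes "is_tree V E" "colour_classes V E A B" "3 \<le> p" "2 \<le> k" "\<forall>x\<in>A. k \<le> deg E x"
    "A \<noteq> {}" "H1 n p (card A) k VG EG"
  shows "blowup_free V E p VG EG"
  unfolding blowup_free_def
proof
  assume sub: "subgraph_of (blowup_V V E p) (blowup_E V E p) VG EG"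
  have split: "\<exists>C1 C2. admissible_split k W EW C1 C2" if "emb_L1 k W EW" for W :: "'b set" and EW
    using emb_L1_admissible_split[OF assms(4) that] by blast
  obtain f X EXX W EW C1 C2 where host: "bounded_host V E p VG EG f A B X C1 C2 k"
    and "EXX = complete_edges X" "emb_L1 k W EW" "admissible_split k W EW C1 C2"
    and "\<forall>u\<in>X. \<forall>v\<in>X. {u, v} \<in> EG \<longrightarrow> {u, v} \<in> EXX"
    by (rule in_family_bounded_host[OF assms(1-6) assms(7)[unfolded H1_def] edges_within_complete
          split sub])
  then have "card C1 + card C2 = 2 * k - 1"
    using admissible_split_card unfolding emb_L1_def by metis
  then show False using bounded_host.card_classes_ge[OF host] assms(4) by linarith
qed

lemma common_neighbour_in_B0:
  assumes "is_graph V E" "x1 \<noteq> x2" "x1 \<in> A0" "x2 \<in> A0" "y \<in> B" "{x1, y} \<in> E" "{x2, y} \<in> E"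
  shows "y \<in> {y \<in> B. card (nbrs E y \<inter> A0) \<ge> 2}"
proof -
  have "{x1, x2} \<subseteq> nbrs E y \<inter> A0" using assms unfolding nbrs_def by auto
  then have "card {x1, x2} \<le> card (nbrs E y \<inter> A0)"
    using finite_nbrs[OF assms(1)] by (intro card_mono) auto
  then show ?thesis using assms(2,5) by simp
qed

lemma L2_blowup_B0_vertex:
  fixes V :: "'a set" and VG :: "'b set"
  assumes "is_tree V E" "colour_classes V E A B" "3 \<le> p" "2 \<le> k"
    "\<forall>x\<in>A. k \<le> deg E x" "A \<noteq> {}" "in_family topg (emb_L2 k) n p (card A) VG EG"
    and top: "\<And>X EXX. topg X EXX \<Longrightarrow> \<forall>e\<in>EXX. e \<subseteq> X"
    and "subgraph_of (blowup_V V E p) (blowup_E V E p) VG EG"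
  obtains z X EXX y where "odd k" "z \<in> X" "topg X EXX"
    "y \<in> {y \<in> B. card (nbrs E y \<inter> {x \<in> A. deg E x = k}) \<ge> 2}"
    "deg E y \<le> card {w \<in> X. w \<noteq> z \<and> {z, w} \<in> EXX} + 2"
proof -
  obtain f X EXX W EW C1 C2 where host: "bounded_host V E p VG EG f A B X C1 C2 k"
    and top_X: "topg X EXX" and "emb_L2 k W EW" "admissible_split k W EW C1 C2"
    and X_edge: "\<forall>u\<in>X. \<forall>v\<in>X. {u, v} \<in> EG \<longrightarrow> {u, v} \<in> EXX"
    by (rule in_family_bounded_host[OF assms(1-7) top emb_L2_admissible_split[OF assms(4)]
          assms(9)])
  interpret bounded_host V E p VG EG f A B X C1 C2 k by (rule host)
  obtain x1 x2 y where pair: "x1 \<in> A" "x2 \<in> A" "x1 \<noteq> x2" "deg E x1 = k" "deg E x2 = k"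
      "y \<in> B" "{x1, y} \<in> E" "{x2, y} \<in> E" "phi y \<in> X"
    and deg_y: "deg E y \<le> card {w \<in> X. w \<noteq> phi y \<and> {phi y, w} \<in> EG} + 2"
    by (rule apex_neighbour_pair)
  have y_B0: "y \<in> {y \<in> B. card (nbrs E y \<inter> {x \<in> A. deg E x = k}) \<ge> 2}"
    using common_neighbour_in_B0[OF graph pair(3), of "{x \<in> A. deg E x = k}"] pair by simp
  have "card {w \<in> X. w \<noteq> phi y \<and> {phi y, w} \<in> EG}
      \<le> card {w \<in> X. w \<noteq> phi y \<and> {phi y, w} \<in> EXX}"
    using X_edge pair(9) finite_X by (intro card_mono) auto
  then have "deg E y \<le> card {w \<in> X. w \<noteq> phi y \<and> {phi y, w} \<in> EXX} + 2"
    using deg_y by linarith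
  with y_B0 show ?thesis using that[OF odd_k pair(9) top_X] by blast
qed

lemma H2_blowup_free:
  fixes V :: "'a set" and VG :: "'b set"
  assumes "is_tree V E" "colour_classes V E A B" "3 \<le> p" "2 \<le> k" "\<forall>x\<in>A. k \<le> deg E x"
    "A \<noteq> {}" "even k \<or> {y \<in> B. card (nbrs E y \<inter> {x \<in> A. deg E x = k}) \<ge> 2} = {}"
    "H2 n p (card A) k VG EG"
  shows "blowup_free V E p VG EG"
  unfolding blowup_free_def
proof
  assume sub: "subgraph_of (blowup_V V E p) (blowup_E V E p) VG EG"
  obtain z and X :: "'b set" and EXX y where "odd k" "z \<in> X" "EXX = complete_edges X"
    "y \<in> {y \<in> B. card (nbrs E y \<inter> {x \<in> A. deg E x = k}) \<ge> 2}"
    "deg E y \<le> card {w \<in> X. w \<noteq> z \<and> {z, w} \<in> EXX} + 2"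
    by (rule L2_blowup_B0_vertex[OF assms(1-6) assms(8)[unfolded H2_def] edges_within_complete sub])
  then show False using assms(7) by blast
qed

lemma H2d_blowup_free:
  fixes V :: "'a set" and VG :: "'b set" and b :: int
  assumes tree: "is_tree V E" and "colour_classes V E A B" "3 \<le> p" "2 \<le> k"
    "\<forall>x\<in>A. k \<le> deg E x" "A \<noteq> {}"
    and B0: "B0 = {y \<in> B. card (nbrs E y \<inter> {x \<in> A. deg E x = k}) \<ge> 2}"
    and "1 \<le> b" and b: "B0 \<noteq> {} \<longrightarrow> b + 2 = int (Min (deg E ` B0))"
    and "H2d n p (card A) (nat (b - 1)) k VG EG"
  shows "blowup_free V E p VG EG"
  unfolding blowup_free_def
proof
  assume sub: "subgraph_of (blowup_V V E p) (blowup_E V E p) VG EG"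
  obtain z and X :: "'b set" and EXX y where "odd k"
    and top: "z \<in> X" "almost_regular (nat (b - 1)) X EXX" and "y \<in> B0"
    and deg_y: "deg E y \<le> card {w \<in> X. w \<noteq> z \<and> {z, w} \<in> EXX} + 2"
    unfolding B0
    by (rule L2_blowup_B0_vertex[OF assms(1-6) assms(10)[unfolded H2d_def] almost_regular_edges
          sub])
  have "finite B"
    using tree assms(2) unfolding is_tree_def colour_classes_def is_graph_def by (metis finite_Un)
  then have "Min (deg E ` B0) \<le> deg E y" using \<open>y \<in> B0\<close> unfolding B0 by simp
  then have "b + 2 \<le> int (deg E y)" using b \<open>y \<in> B0\<close> by auto
  moreover have "card {w \<in> X. w \<noteq> z \<and> {z, w} \<in> EXX} \<le> nat (b - 1)"
    using almost_regular_card_adjacent_le[OF top(2,1)] .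
  ultimately show False using deg_y \<open>1 \<le> b\<close> by linarith
qed

theorem lemma2p6:
  fixes V A B A0 B0 :: "'a set" and E :: "'a set set" and p k a :: nat and b c :: int
  assumes "p \<ge> 3"
    and "is_tree V E"
    and "colour_classes V E A B"
    and "card A \<le> card B"
    and "A \<noteq> {}"
    and "k = Min (deg E ` A)"
    and "k \<ge> 2"
    and "A0 = {x \<in> A. deg E x = k}"
    and "B0 = {y \<in> B. card (nbrs E y \<inter> A0) \<ge> 2}"
    and "a = card A"
    and "B0 \<noteq> {} \<longrightarrow> b + 2 = int (Min (deg E ` B0))"
    and "c = int a - 1 - \<lceil>real (k - 1) / real (a - 1)\<rceil>"
  shows
    "(even k \<longrightarrow> (\<forall>n (VG :: 'b set) EG. n \<ge> a \<and> (H1 n p a k VG EG \<or> H2 n p a k VG EG)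
        \<longrightarrow> blowup_free V E p VG EG)) \<and>
     (odd k \<and> B0 = {} \<longrightarrow> (\<forall>n (VG :: 'b set) EG. n \<ge> a \<and> H2 n p a k VG EG
        \<longrightarrow> blowup_free V E p VG EG)) \<and>
     (odd k \<and> B0 \<noteq> {} \<and> (b = 0 \<or> (0 < b \<and> b < c)) \<longrightarrow>
        (\<forall>n (VG :: 'b set) EG. n \<ge> a \<and> H1 n p a k VG EG \<longrightarrow> blowup_free V E p VG EG)) \<and>
     (odd k \<and> B0 \<noteq> {} \<and> b > max 0 c \<longrightarrow>
        (\<forall>n (VG :: 'b set) EG. n \<ge> a \<and> H2d n p a (nat (b - 1)) k VG EG
           \<longrightarrow> blowup_free V E p VG EG)) \<and>
     (odd k \<and> B0 \<noteq> {} \<and> b = c \<and> c > 0 \<longrightarrow>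
        (\<forall>n (VG :: 'b set) EG. n \<ge> a \<and> (H1 n p a k VG EG \<or> H2d n p a (nat (b - 1)) k VG EG)
           \<longrightarrow> blowup_free V E p VG EG))"
proof -
  have "finite A"
    using assms(2,3) unfolding is_tree_def is_graph_def colour_classes_def by (metis finite_Un)
  then have deg_A: "\<forall>x\<in>A. k \<le> deg E x" using assms(6) by simp
  note setting = assms(2,3,1,7) deg_A assms(5)
  note B0 = assms(9)[unfolded assms(8)]
  have free_H1: "blowup_free V E p VG EG" if "H1 n p a k VG EG" for n and VG :: "'b set" and EG
    using H1_blowup_free[OF setting] that unfolding assms(10) .
  have free_H2: "blowup_free V E p VG EG" if "even k \<or> B0 = {}" "H2 n p a k VG EG"
    for n and VG :: "'b set" and EG
    using H2_blowup_free[OF setting] that unfolding B0 assms(10) .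
  have free_H2d: "blowup_free V E p VG EG" if "0 < b" "H2d n p a (nat (b - 1)) k VG EG"
    for n and VG :: "'b set" and EG
    using H2d_blowup_free[OF setting B0 _ assms(11)] that unfolding assms(10) by simp
  show ?thesis using free_H1 free_H2 free_H2d by (intro conjI impI allI) auto
qed

end
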